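(* Let $n \ge 4$ and let $a \in \mathbb{N}$ with $a^2 \le n$. Then there exist diagonal matrices $v_1, \dots, v_a \in M_n(\mathbb{C})$ with $\sum_{i=1}^a v_i^* v_i = \sum_{i=1}^a v_i v_i^* = I$ such that the map $\varphi(A) = \sum_{i=1}^a v_i^* A v_i$ ($A \in M_n(\mathbb{C})$) is an extremal point of $UCPT(n)$ with $r(\varphi) = a$. Consequently, the corresponding state $\pi(\varphi)$ is an extremal point of $\Gamma(n)$ which is a diagonal marginal tracial state of rank $a$.
   Context: $\mathrm{tr}$ is the normalized trace on $M_n(\mathbb{C})$ and ${}^tB$ the transpose with respect to a fixed orthonormal basis. $UCPT(n)$ is the convex set of unital, completely positive, trace-preserving linear maps $M_n(\mathbb{C}) \to M_n(\mathbb{C})$. For $\varphi \in UCPT(n)$, $r(\varphi)$ is the number $k$ of terms in a representation $\varphi(A) = \sum_{i=1}^k v_i^*Av_i$ with $v_1,\dots,v_k$ linearly independent (this number is uniquely determined). $\Gamma(n)$ is the convex set of states $\rho$ on $M_n(\mathbb{C}) \otimes M_n(\mathbb{C})$ with $\rho(A \otimes I) = \mathrm{tr}(A)$ and $\rho(I\otimes B) = \mathrm{tr}(B)$ for all $A,B$ (marginal tracial states). The map $\pi: UCPT(n) \to \Gamma(n)$ is $\pi(\varphi)(A\otimes B) = \mathrm{tr}(\varphi(A)\,{}^tB)$; it is a bijection preserving extremality, with $\mathrm{rank}(\pi(\varphi)) = r(\varphi)$, where the rank of a state is the rank of its density matrix. A linear map $\varphi$ on $M_n(\mathbb{C})$ is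 diagonal if $\varphi(A) = C \circ A$ (Schur/entrywise product) for some $C \in M_n(\mathbb{C})$; a marginal tracial state is diagonal if it equals $\pi(\varphi)$ for a diagonal $\varphi \in UCPT(n)$. *)

theory Defs
  imports "HOL-Analysis.Analysis"
begin

text \<open>Matrices in M_n(C) are represented as complex^'n^'n, where the finite
  index type 'n has CARD('n) = n elements (orthonormal basis indexed by 'n).\<close>

definition cnonneg :: "complex \<Rightarrow> bool" where
  "cnonneg z \<longleftrightarrow> Im z = 0 \<and> 0 \<le> Re z"

definition adj :: "complex^'n::finite^'m::finite \<Rightarrow> complex^'m::finite^'n::finite" where
  "adj A = (\<chi> i j. cnj (A $ j $ i))"

definition cscaleM :: "complex \<Rightarrow> complex^'n::finite^'m::finite \<Rightarrow> complex^'n::finite^'m::finite" where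
  "cscaleM c A = (\<chi> i j. c * A $ i $ j)"

definition ntr :: "complex^'n::finite^'n::finite \<Rightarrow> complex" where
  "ntr A = (\<Sum>i\<in>UNIV. A $ i $ i) / of_nat CARD('n)"

definition Tr :: "complex^'n::finite^'n::finite \<Rightarrow> complex" where
  "Tr A = (\<Sum>i\<in>UNIV. A $ i $ i)"

definition clinear_map :: "(complex^'n::finite^'n::finite \<Rightarrow> complex^'m::finite^'m::finite) \<Rightarrow> bool" where
  "clinear_map f \<longleftrightarrow> (\<forall>A B. f (A + B) = f A + f B) \<and> (\<forall>c A. f (cscaleM c A) = cscaleM c (f A))"

definition clinear_functional :: "(complex^'n::finite^'n::finite \<Rightarrow> complex) \<Rightarrow> bool" where
  "clinear_functional f \<longleftrightarrow> (\<forall>A B. f (A + B) = f A + f B) \<and> (\<forall>c A. f (cscaleM c A) = c * f A)"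

definition psd :: "complex^'m::finite^'m::finite \<Rightarrow> bool" where
  "psd X \<longleftrightarrow> (\<forall>x :: complex^'m. cnonneg (\<Sum>i\<in>UNIV. cnj (x $ i) * (X *v x) $ i))"

text \<open>Positive semidefiniteness of a k x k block matrix with blocks X p q in M_n(C),
  i.e. of an element of M_k(M_n(C)).\<close>
definition block_psd :: "nat \<Rightarrow> (nat \<Rightarrow> nat \<Rightarrow> complex^'n::finite^'n::finite) \<Rightarrow> bool" where
  "block_psd k X \<longleftrightarrow> (\<forall>x :: nat \<Rightarrow> complex^'n.
      cnonneg (\<Sum>p<k. \<Sum>q<k. \<Sum>i\<in>UNIV. cnj (x p $ i) * (X p q *v x q) $ i))"

text \<open>Complete positivity: id_k \<otimes> \<phi> is positive for every k.\<close>
definition completely_positive :: "(complex^'n::finite^'n::finite \<Rightarrow> complex^'n::finite^'n::finite) \<Rightarrow> bool" where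
  "completely_positive \<phi> \<longleftrightarrow>
     (\<forall>k X. block_psd k X \<longrightarrow> block_psd k (\<lambda>p q. \<phi> (X p q)))"

definition UCPT :: "(complex^'n::finite^'n::finite \<Rightarrow> complex^'n::finite^'n::finite) set" where
  "UCPT = {\<phi>. clinear_map \<phi> \<and> completely_positive \<phi> \<and> \<phi> (mat 1) = mat 1 \<and>
               (\<forall>A. ntr (\<phi> A) = ntr A)}"

definition extreme_in :: "('a \<Rightarrow> 'b::real_vector) set \<Rightarrow> ('a \<Rightarrow> 'b) \<Rightarrow> bool" where
  "extreme_in C x \<longleftrightarrow> x \<in> C \<and>
     (\<forall>y\<in>C. \<forall>z\<in>C. \<forall>t::real. 0 < t \<and> t < 1 \<and> x = (\<lambda>A. t *\<^sub>R y A + (1 - t) *\<^sub>R z A)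
        \<longrightarrow> y = z)"

definition cindep_fam :: "nat \<Rightarrow> (nat \<Rightarrow> complex^'n::finite^'m::finite) \<Rightarrow> bool" where
  "cindep_fam k w \<longleftrightarrow>
     (\<forall>c :: nat \<Rightarrow> complex. (\<Sum>i<k. cscaleM (c i) (w i)) = 0 \<longrightarrow> (\<forall>i<k. c i = 0))"

definition kraus_rank :: "(complex^'n::finite^'n::finite \<Rightarrow> complex^'n::finite^'n::finite) \<Rightarrow> nat" where
  "kraus_rank \<phi> = (LEAST k. \<exists>w. cindep_fam k w \<and>
       (\<forall>A. \<phi> A = (\<Sum>i<k. adj (w i) ** A ** w i)))"

text \<open>M_n(C) \<otimes> M_n(C) realised as M_{n^2}(C) indexed by 'n \<times> 'n (Kronecker product).\<close>
definition kron :: "complex^'n::finite^'n::finite \<Rightarrow> complex^'n::finite^'n::finite \<Rightarrow> complex^('n::finite \<times> 'n::finite)^('n::finite \<times> 'n::finite)" where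
  "kron A B = (\<chi> p q. A $ fst p $ fst q * B $ snd p $ snd q)"

definition is_state :: "(complex^('n::finite \<times> 'n::finite)^('n::finite \<times> 'n::finite) \<Rightarrow> complex) \<Rightarrow> bool" where
  "is_state \<rho> \<longleftrightarrow> clinear_functional \<rho> \<and> (\<forall>X. psd X \<longrightarrow> cnonneg (\<rho> X)) \<and> \<rho> (mat 1) = 1"

definition Gamma_mts :: "(complex^('n::finite \<times> 'n::finite)^('n::finite \<times> 'n::finite) \<Rightarrow> complex) set" where
  "Gamma_mts = {\<rho>. is_state \<rho> \<and> (\<forall>A. \<rho> (kron A (mat 1)) = ntr A) \<and> (\<forall>B. \<rho> (kron (mat 1) B) = ntr B)}"

definition pi_map :: "(complex^'n::finite^'n::finite \<Rightarrow> complex^'n::finite^'n::finite) \<Rightarrow> (complex^('n::finite \<times> 'n::finite)^('n::finite \<times> 'n::finite) \<Rightarrow> complex)" where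
  "pi_map \<phi> = (THE \<rho>. clinear_functional \<rho> \<and>
      (\<forall>A B. \<rho> (kron A B) = ntr (\<phi> A ** transpose B)))"

definition cindep_set :: "(complex^'m::finite) set \<Rightarrow> bool" where
  "cindep_set S \<longleftrightarrow> (\<forall>c :: complex^'m \<Rightarrow> complex.
      (\<Sum>x\<in>S. (\<chi> i. c x * x $ i)) = 0 \<longrightarrow> (\<forall>x\<in>S. c x = 0))"

definition crank :: "complex^'m::finite^'m::finite \<Rightarrow> nat" where
  "crank D = Max {card S | S. S \<subseteq> columns D \<and> cindep_set S}"

definition state_rank :: "(complex^'m::finite^'m::finite \<Rightarrow> complex) \<Rightarrow> nat" where
  "state_rank \<rho> = crank (THE D. \<forall>X. \<rho> X = Tr (D ** X))"

definition diagonal_map :: "(complex^'n::finite^'n::finite \<Rightarrow> complex^'n::finite^'n::finite) \<Rightarrow> bool" where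
  "diagonal_map \<phi> \<longleftrightarrow> (\<exists>C. \<forall>A. \<phi> A = (\<chi> i j. C $ i $ j * A $ i $ j))"

definition diagonal_mts :: "(complex^('n::finite \<times> 'n::finite)^('n::finite \<times> 'n::finite) \<Rightarrow> complex) \<Rightarrow> bool" where
  "diagonal_mts \<rho> \<longleftrightarrow> (\<exists>\<psi>\<in>UCPT. diagonal_map \<psi> \<and> \<rho> = pi_map \<psi>)"

definition diagonal_matrix :: "complex^'n::finite^'n::finite \<Rightarrow> bool" where
  "diagonal_matrix v \<longleftrightarrow> (\<forall>i j. i \<noteq> j \<longrightarrow> v $ i $ j = 0)"

end

theory Submission
  imports Defs
begin

(*
  Fix an injection of the index pairs {..<a} x {..<a} into the basis
  of C^n (possible since a^2 <= n).  Attach to every basis index j a unit vector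
  g j in C^a: the standard vector e_p to the pair (p,p), and to the pairs (p,q) and
  (q,p) with p < q the "test vectors" 3/5 e_p + 4/5 e_q and 3/5 e_p + 4i/5 e_q.  Let
  C = gram a g be their Gram matrix (a correlation matrix of rank a) and take the
  diagonal Kraus operators v_r = diag (g j r)_j, so that phi = Schur multiplication by C.

  Next it shows that unital Schur
  multipliers with Gram coefficients lie in UCPT, that every UCPT map occurring in
  a convex decomposition of such a multiplier is itself a Schur multiplier, and
  hence extremality of C transfers to phi.  The same is done for the associated
  marginal tracial state pi(phi).  The ranks are computed from the standard vectors
  e_p, which make the Kraus operators and the columns of the density matrix
  linearly independent.
*)

definition qform :: "('m::finite \<Rightarrow> 'm \<Rightarrow> complex) \<Rightarrow> ('m \<Rightarrow> complex) \<Rightarrow> ('m \<Rightarrow> complex) \<Rightarrow> complex" where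
  "qform P x y = (\<Sum>j\<in>UNIV. \<Sum>k\<in>UNIV. cnj (x j) * P j k * y k)"

definition psd_kernel :: "('m::finite \<Rightarrow> 'm \<Rightarrow> complex) \<Rightarrow> bool" where
  "psd_kernel P \<longleftrightarrow> (\<forall>x. cnonneg (qform P x x))"

lemma cnonneg_sum: "(\<And>x. x \<in> S \<Longrightarrow> cnonneg (f x)) \<Longrightarrow> cnonneg (sum f S)"
  unfolding cnonneg_def by (simp add: Re_sum Im_sum sum_nonneg)

lemma cnonneg_normsq: "cnonneg (cnj z * z)"
  unfolding cnonneg_def by (simp add: complex_mult_cnj)

lemma cnonneg_div: "cnonneg z \<Longrightarrow> cnonneg (z / of_nat n)"
  unfolding cnonneg_def by (simp add: Re_divide_of_nat Im_divide_of_nat)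

lemma cnonneg_mult_nat: "cnonneg z \<Longrightarrow> cnonneg (of_nat n * z)"
  unfolding cnonneg_def by simp

lemma cnonneg_convex_zero:
  assumes "cnonneg a" "cnonneg b" "0 < t" "t < 1"
    and "complex_of_real t * a + complex_of_real (1-t) * b = 0"
  shows "a = 0 \<and> b = 0"
proof -
  have "t * Re a + (1-t) * Re b = 0" "t * Im a + (1-t) * Im b = 0"
    using assms(5) by (simp_all add: complex_eq_iff)
  moreover have "0 \<le> t * Re a" "0 \<le> (1-t) * Re b" using assms unfolding cnonneg_def by auto
  ultimately have "t * Re a = 0" "(1-t) * Re b = 0" by linarith+
  then show ?thesis using assms unfolding cnonneg_def by (simp add: complex_eq_iff)
qed

lemma cnonneg_affine_zero:
  assumes h: "\<And>c. cnonneg (cnj c * u + c * w + d)"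
  shows "u = 0 \<and> w = 0"
proof -
  have d: "Im d = 0" "0 \<le> Re d" using h[of 0] unfolding cnonneg_def by auto
  have hr: "Im (complex_of_real s * (u + w)) = 0 \<and> 0 \<le> s * Re (u + w) + Re d" for s
    using h[of "complex_of_real s"] d unfolding cnonneg_def by (simp add: algebra_simps)
  have i1: "Im (u + w) = 0" using hr[of 1] by simp
  have r1: "Re (u + w) = 0"
  proof (rule ccontr)
    assume ne: "Re (u + w) \<noteq> 0"
    have "0 \<le> (- (Re d + 1) / Re (u + w)) * Re (u + w) + Re d" using hr by blast
    then show False using ne by simp
  qed
  have hi: "Im (\<i> * complex_of_real s * (w - u)) = 0 \<and> 0 \<le> Re (\<i> * complex_of_real s * (w - u)) + Re d" for s
    using h[of "\<i> * complex_of_real s"] d unfolding cnonneg_def by (simp add: algebra_simps)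
  have i2: "Re (w - u) = 0" using hi[of 1] by simp
  have r2: "Im (w - u) = 0"
  proof (rule ccontr)
    assume ne: "Im (w - u) \<noteq> 0"
    have "0 \<le> Re (\<i> * complex_of_real ((Re d + 1) / Im (w - u)) * (w - u)) + Re d" using hi by blast
    then show False using ne by simp
  qed
  show ?thesis using i1 r1 i2 r2 by (simp add: complex_eq_iff)
qed

lemma real_quadratic_nonneg_linear_zero:
  fixes N q :: real
  assumes q: "0 \<le> q" and ge: "\<And>s. 0 \<le> 2 * s * N + s * s * q"
  shows "N = 0"
proof (rule ccontr)
  assume "N \<noteq> 0"
  define s where "s = - N / (q + 1)"
  have sD: "s * (q+1) = - N" using q by (simp add: s_def)
  have "(q+1) * (q+1) * (2 * s * N + s * s * q) = 2 * (q+1) * N * (s * (q+1)) + (s * (q+1)) * (s * (q+1)) * q"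
    by (simp add: algebra_simps)
  also have "\<dots> = -(N * N * (q+2))" unfolding sD by (simp add: algebra_simps)
  finally have eq: "(q+1) * (q+1) * (2 * s * N + s * s * q) = -(N * N * (q+2))" .
  have "0 < N * N" using \<open>N \<noteq> 0\<close> not_real_square_gt_zero by blast
  then have "0 < N * N * (q+2)" using q by simp
  moreover have "0 \<le> (q+1) * (q+1) * (2 * s * N + s * s * q)" using ge[of s] q by simp
  ultimately show False using eq by simp
qed

lemma qform_add_left: "qform P (\<lambda>i. x i + y i) z = qform P x z + qform P y z"
  by (simp add: qform_def algebra_simps sum.distrib)

lemma qform_add_right: "qform P z (\<lambda>i. x i + y i) = qform P z x + qform P z y"
  by (simp add: qform_def algebra_simps sum.distrib)

lemma qform_scale_left: "qform P (\<lambda>i. c * x i) z = cnj c * qform P x z"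
  by (simp add: qform_def algebra_simps sum_distrib_left)

lemma qform_scale_right: "qform P z (\<lambda>i. c * x i) = c * qform P z x"
  by (simp add: qform_def algebra_simps sum_distrib_left)

lemma qform_kernel_lincomb: "qform (\<lambda>j k. c * A j k + d * B j k) x y = c * qform A x y + d * qform B x y"
proof -
  have "cnj (x j) * (c * A j k + d * B j k) * y k = c * (cnj (x j) * A j k * y k) + d * (cnj (x j) * B j k * y k)" for j k
    by (simp add: algebra_simps)
  then show ?thesis unfolding qform_def by (simp only: sum.distrib sum_distrib_left)
qed

lemma dsum_delta:
  assumes "finite S" "a \<in> S" "b \<in> S"
  shows "(\<Sum>j\<in>S. \<Sum>k\<in>S. (if j = a then c else 0) * P j k * (if k = b then d else 0)) = c * P a b * (d::complex)"
proof -
  have "(\<Sum>k\<in>S. (if j = a then c else 0) * P j k * (if k = b then d else 0)) = (if j = a then c * P j b * d else 0)" for j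
    using assms by (cases "j = a") (simp_all add: if_distrib[of "\<lambda>x. _ * x"] sum.delta cong: if_cong)
  then show ?thesis using assms by (simp add: sum.delta)
qed

lemma dsum_and: "(\<Sum>a\<in>(UNIV::'n::finite set). \<Sum>b\<in>(UNIV::'n set). if a = j \<and> b = k then f a b else 0) = (f j k :: complex)"
proof -
  have "(\<Sum>b\<in>(UNIV::'n set). if a = j \<and> b = k then f a b else 0) = (if a = j then f a k else 0)" for a
    by (cases "a = j") (simp_all add: sum.delta)
  then show ?thesis by (simp add: sum.delta)
qed

lemma qform_delta1: "qform P (\<lambda>i. if i = j then \<alpha> else 0) (\<lambda>i. if i = j then \<alpha> else 0) = cnj \<alpha> * \<alpha> * P j j"
  by (simp add: qform_def if_distrib[of cnj] dsum_delta cong: if_cong)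

lemma qform_delta2:
  assumes "j \<noteq> k"
  shows "qform P (\<lambda>i. (if i = j then \<alpha> else 0) + (if i = k then \<beta> else 0)) (\<lambda>i. (if i = j then \<alpha> else 0) + (if i = k then \<beta> else 0))
   = cnj \<alpha> * \<alpha> * P j j + cnj \<alpha> * \<beta> * P j k + cnj \<beta> * \<alpha> * P k j + cnj \<beta> * \<beta> * P k k"
  using assms by (simp add: qform_add_left qform_add_right qform_def if_distrib[of cnj] dsum_delta cong: if_cong)

lemma psd_kernel_diag: "psd_kernel P \<Longrightarrow> cnonneg (P j j)"
  unfolding psd_kernel_def using qform_delta1[of P j 1] by (metis mult_1 complex_cnj_one)

lemma psd_kernel_herm:
  assumes "psd_kernel P" shows "P k j = cnj (P j k)"
proof (cases "j = k")
  case True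
  then show ?thesis using psd_kernel_diag[OF assms, of j] unfolding cnonneg_def by (simp add: complex_eq_iff)
next
  case False
  have r1: "Im (P j j) = 0" "Im (P k k) = 0" using psd_kernel_diag[OF assms] unfolding cnonneg_def by auto
  have h: "cnonneg (P j j + c * P j k + cnj c * P k j + cnj c * c * P k k)" for c
  proof -
    have "cnonneg (qform P (\<lambda>i. (if i = j then 1 else 0) + (if i = k then c else 0)) (\<lambda>i. (if i = j then 1 else 0) + (if i = k then c else 0)))"
      using assms unfolding psd_kernel_def by blast
    then show ?thesis using qform_delta2[OF False, of P 1 c] by simp
  qed
  have "Im (cnj c * c * P k k) = 0" for c using r1 by (simp add: complex_mult_cnj)
  then have "Im (c * P j k + cnj c * P k j) = 0" for c
    using h[of c] r1 unfolding cnonneg_def by simp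
  from this[of 1] this[of "\<i>"] show ?thesis by (simp add: complex_eq_iff)
qed

lemma qform_herm: "psd_kernel P \<Longrightarrow> qform P y x = cnj (qform P x y)"
proof -
  assume P: "psd_kernel P"
  have "cnj (qform P x y) = (\<Sum>j\<in>UNIV. \<Sum>k\<in>UNIV. x j * cnj (P j k) * cnj (y k))"
    unfolding qform_def by (simp add: cnj_sum)
  also have "\<dots> = (\<Sum>j\<in>UNIV. \<Sum>k\<in>UNIV. cnj (y k) * P k j * x j)"
    by (intro sum.cong refl) (simp add: psd_kernel_herm[OF P, symmetric] ac_simps)
  also have "\<dots> = qform P y x" unfolding qform_def by (rule sum.swap)
  finally show ?thesis by simp
qed

lemma psd_kernel_null:
  assumes P: "psd_kernel P" and z: "qform P x x = 0"
  shows "(\<Sum>k\<in>UNIV. P j k * x k) = 0"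
proof -
  define y where "y = (\<lambda>j. \<Sum>k\<in>UNIV. P j k * x k)"
  define N where "N = qform P y x"
  have N: "N = (\<Sum>j\<in>UNIV. cnj (y j) * y j)"
    unfolding N_def qform_def y_def by (simp add: sum_distrib_left mult.assoc)
  have Nr: "Im N = 0" "0 \<le> Re N" unfolding N by (auto simp: Im_sum Re_sum complex_mult_cnj sum_nonneg)
  define q where "q = Re (qform P y y)"
  have q0: "0 \<le> q" "Im (qform P y y) = 0" using P unfolding psd_kernel_def cnonneg_def q_def by auto
  have expand: "qform P (\<lambda>i. x i + complex_of_real s * y i) (\<lambda>i. x i + complex_of_real s * y i)
      = complex_of_real (2 * s) * N + complex_of_real (s * s) * qform P y y" for s
  proof -
    have "cnj N = N" using Nr by (simp add: complex_eq_iff)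
    moreover have "qform P x y = cnj N" unfolding N_def by (rule qform_herm[OF P])
    ultimately show ?thesis
      by (simp add: qform_add_left qform_add_right qform_scale_left qform_scale_right z N_def[symmetric] algebra_simps)
  qed
  have "0 \<le> 2 * s * Re N + s * s * q" for s
    using P[unfolded psd_kernel_def, rule_format, of "\<lambda>i. x i + complex_of_real s * y i"] expand[of s] q0 Nr
    unfolding cnonneg_def q_def by simp
  then have "Re N = 0" using real_quadratic_nonneg_linear_zero q0(1) by blast
  then have "(\<Sum>j\<in>UNIV. Re (cnj (y j) * y j)) = 0" using N Nr by (simp add: Re_sum)
  then have "\<forall>j\<in>UNIV. Re (cnj (y j) * y j) = 0"
    by (subst sum_nonneg_eq_0_iff[symmetric]) (auto simp: complex_mult_cnj)
  then have "y j = 0" by (auto simp: complex_mult_cnj complex_eq_iff)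
  then show ?thesis unfolding y_def .
qed

lemma psd_kernel_zero_diag:
  assumes P: "psd_kernel P" and z: "P m m = 0"
  shows "P l m = 0" "P m l = 0"
proof -
  have "qform P (\<lambda>i. if i = m then 1 else 0) (\<lambda>i. if i = m then 1 else 0) = 0"
    using qform_delta1[of P m 1] z by simp
  from psd_kernel_null[OF P this, of l] show "P l m = 0"
    by (simp add: if_distrib[of "\<lambda>x. P l _ * x"] cong: if_cong)
  then show "P m l = 0" using psd_kernel_herm[OF P, of l m] by simp
qed

lemma psd_component_null:
  assumes P1: "psd_kernel C1" and P2: "psd_kernel C2" and t: "0 < t" "t < 1"
    and comb: "\<And>j k. C j k = complex_of_real t * C1 j k + complex_of_real (1-t) * C2 j k"
    and z: "qform C x x = 0"
  shows "(\<Sum>k\<in>UNIV. C1 l k * x k) = 0"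
proof -
  have "C = (\<lambda>j k. complex_of_real t * C1 j k + complex_of_real (1-t) * C2 j k)"
    using comb by (intro ext) auto
  then have "complex_of_real t * qform C1 x x + complex_of_real (1-t) * qform C2 x x = 0"
    using z qform_kernel_lincomb by metis
  moreover have "cnonneg (qform C1 x x)" "cnonneg (qform C2 x x)"
    using P1 P2 unfolding psd_kernel_def by auto
  ultimately have "qform C1 x x = 0" using cnonneg_convex_zero t by blast
  then show ?thesis by (rule psd_kernel_null[OF P1])
qed

definition gram :: "nat \<Rightarrow> ('m \<Rightarrow> nat \<Rightarrow> complex) \<Rightarrow> 'm \<Rightarrow> 'm \<Rightarrow> complex" where
  "gram a g j k = (\<Sum>i<a. cnj (g j i) * g k i)"

lemma qform_gram:
  "qform (gram a g) x x = (\<Sum>i<a. cnj (\<Sum>k\<in>UNIV. g k i * x k) * (\<Sum>k\<in>UNIV. g k i * x k))"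
  unfolding qform_def gram_def
  by (simp add: sum_distrib_left sum_distrib_right cnj_sum sum.swap[of _ "{..<a}"] ac_simps)

definition two_point :: "nat \<Rightarrow> complex \<Rightarrow> nat \<Rightarrow> complex \<Rightarrow> nat \<Rightarrow> complex" where
  "two_point p c1 q c2 = (\<lambda>i. (if i = p then c1 else 0) + (if i = q then c2 else 0))"

(* Unit test vectors in C^a indexed by pairs: e_p for (p,p), 3/5 e_p + 4/5 e_q for p < q,
   and 3/5 e_q + 4i/5 e_p for p > q.  Their rank-one projections span all Hermitian matrices. *)
definition test_vec :: "nat \<times> nat \<Rightarrow> nat \<Rightarrow> complex" where
  "test_vec pq = (if fst pq = snd pq then (\<lambda>i. if i = fst pq then 1 else 0)
     else if fst pq < snd pq then two_point (fst pq) (3/5) (snd pq) (4/5)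
     else two_point (snd pq) (3/5) (fst pq) (4 * \<i> / 5))"

definition test_frame :: "nat \<Rightarrow> ('m \<Rightarrow> nat \<Rightarrow> complex) \<Rightarrow> (nat \<Rightarrow> 'm) \<Rightarrow> bool" where
  "test_frame a g b \<longleftrightarrow> (\<forall>p<a. g (b p) = (\<lambda>i. if i = p then 1 else 0)) \<and>
     (\<forall>p<a. \<forall>q<a. p \<noteq> q \<longrightarrow> (\<exists>m. g m = test_vec (p,q)))"

definition hform :: "nat set \<Rightarrow> (nat \<Rightarrow> nat \<Rightarrow> complex) \<Rightarrow> (nat \<Rightarrow> complex) \<Rightarrow> complex" where
  "hform S M u = (\<Sum>q\<in>S. \<Sum>p\<in>S. cnj (u q) * M q p * u p)"

lemma hform_two_point:
  assumes "finite S" "p \<in> S" "q \<in> S" "p \<noteq> q"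
  shows "hform S M (two_point p \<alpha> q \<beta>) = cnj \<alpha> * \<alpha> * M p p + cnj \<alpha> * \<beta> * M p q + cnj \<beta> * \<alpha> * M q p + cnj \<beta> * \<beta> * M q q"
  using assms by (simp add: hform_def two_point_def distrib_left distrib_right sum.distrib if_distrib[of cnj] dsum_delta cong: if_cong)

lemma gram_component_factors:
  fixes g :: "'n::finite \<Rightarrow> nat \<Rightarrow> complex" and b :: "nat \<Rightarrow> 'n"
  assumes gb: "\<And>p. p < a \<Longrightarrow> g (b p) = (\<lambda>i. if i = p then 1 else 0)"
    and P1: "psd_kernel C1" and P2: "psd_kernel C2" and t: "0 < t" "t < 1"
    and comb: "\<And>j k. gram a g j k = complex_of_real t * C1 j k + complex_of_real (1-t) * C2 j k"
  shows "C1 l m = (\<Sum>q<a. \<Sum>p<a. cnj (g l q) * C1 (b q) (b p) * g m p)"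
proof -
  have kerG: "(\<Sum>k\<in>UNIV. C1 l k * x k) = 0" if x: "\<And>i. i < a \<Longrightarrow> (\<Sum>k\<in>UNIV. g k i * x k) = 0" for x l
    by (rule psd_component_null[OF P1 P2 t comb]) (simp add: qform_gram x)
  have col: "C1 l m = (\<Sum>p<a. C1 l (b p) * g m p)" for l m
  proof -
    define x where "x k = (if k = m then 1 else 0) - (\<Sum>p<a. if k = b p then g m p else 0)" for k
    have "(\<Sum>k\<in>UNIV. g k i * x k) = 0" if "i < a" for i
    proof -
      have "(\<Sum>k\<in>UNIV. g k i * x k) = g m i - (\<Sum>p<a. \<Sum>k\<in>UNIV. if k = b p then g k i * g m p else 0)"
        unfolding x_def by (simp add: right_diff_distrib sum_subtractf sum_distrib_left sum.swap[of _ "{..<a}"] if_distrib[of "\<lambda>z. _ * z"] cong: if_cong)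
      also have "(\<Sum>p<a. \<Sum>k\<in>UNIV. if k = b p then g k i * g m p else 0) = (\<Sum>p<a. g (b p) i * g m p)"
        by (simp add: sum.delta')
      also have "\<dots> = (\<Sum>p<a. if p = i then g m p else 0)"
        by (intro sum.cong refl) (simp add: gb)
      also have "\<dots> = g m i" using that by (simp add: sum.delta')
      finally show ?thesis by simp
    qed
    then have "(\<Sum>k\<in>UNIV. C1 l k * x k) = 0" by (rule kerG)
    moreover have "(\<Sum>k\<in>UNIV. C1 l k * x k) = C1 l m - (\<Sum>p<a. C1 l (b p) * g m p)"
      unfolding x_def by (simp add: right_diff_distrib sum_subtractf sum_distrib_left sum.swap[of _ "{..<a}"] if_distrib[of "\<lambda>z. _ * z"] sum.delta' cong: if_cong)
    ultimately show ?thesis by simp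
  qed
  have "C1 l m = (\<Sum>p<a. cnj (C1 (b p) l) * g m p)"
    unfolding col[of l m] by (intro sum.cong refl) (simp add: psd_kernel_herm[OF P1, of _ l])
  also have "\<dots> = (\<Sum>p<a. cnj (\<Sum>q<a. C1 (b p) (b q) * g l q) * g m p)"
    using col[of "b _" l] by (simp only:)
  also have "\<dots> = (\<Sum>p<a. \<Sum>q<a. cnj (g l q) * C1 (b q) (b p) * g m p)"
    by (simp add: cnj_sum sum_distrib_left psd_kernel_herm[OF P1, symmetric] ac_simps)
  also have "\<dots> = (\<Sum>q<a. \<Sum>p<a. cnj (g l q) * C1 (b q) (b p) * g m p)" by (rule sum.swap)
  finally show ?thesis .
qed

lemma test_vec_forms_identity:
  assumes diag: "\<And>p. M p p = 1"
    and tests: "\<And>p q. p < a \<Longrightarrow> q < a \<Longrightarrow> p \<noteq> q \<Longrightarrow> hform {..<a} M (test_vec (p,q)) = 1"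
    and pq: "p < a" "q < a"
  shows "M q p = (if q = p then 1 else 0)"
proof -
  have off: "M p q = 0 \<and> M q p = 0" if "p < q" "q < a" for p q
  proof -
    have "1 = hform {..<a} M (two_point p (3/5) q (4/5))"
      using tests[of p q] that by (simp add: test_vec_def)
    then have e1: "1 = 9/25 + 12/25 * M p q + 12/25 * M q p + 16/25"
      using that by (simp add: hform_two_point diag)
    have "1 = hform {..<a} M (two_point p (3/5) q (4 * \<i> / 5))"
      using tests[of q p] that by (simp add: test_vec_def)
    then have e2: "1 = 9/25 + 12 * \<i>/25 * M p q - 12 * \<i>/25 * M q p + 16/25"
      using that by (simp add: hform_two_point diag algebra_simps)
    from e1 e2 show ?thesis by (simp add: complex_eq_iff field_simps)
  qed
  show ?thesis using diag off pq by (cases "p < q"; cases "q < p") auto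
qed

(* Its compression
   M to the basis indices has unit diagonal and value 1 at every test vector, so M = 1. *)
lemma gram_extreme_component:
  fixes g :: "'n::finite \<Rightarrow> nat \<Rightarrow> complex" and b :: "nat \<Rightarrow> 'n"
  assumes frame: "test_frame a g b"
    and P1: "psd_kernel C1" and P2: "psd_kernel C2" and d1: "\<And>j. C1 j j = 1"
    and t: "0 < t" "t < 1"
    and comb: "\<And>j k. gram a g j k = complex_of_real t * C1 j k + complex_of_real (1-t) * C2 j k"
  shows "C1 = gram a g"
proof -
  have gb: "\<And>p. p < a \<Longrightarrow> g (b p) = (\<lambda>i. if i = p then 1 else 0)"
    and gpq: "\<And>p q. p < a \<Longrightarrow> q < a \<Longrightarrow> p \<noteq> q \<Longrightarrow> \<exists>m. g m = test_vec (p,q)"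
    using frame unfolding test_frame_def by auto
  define M where "M p q = C1 (b p) (b q)" for p q
  have rep: "C1 l m = (\<Sum>q<a. \<Sum>p<a. cnj (g l q) * M q p * g m p)" for l m
    unfolding M_def by (rule gram_component_factors[OF gb P1 P2 t comb])
  have "hform {..<a} M (test_vec (p,q)) = 1" if pq: "p < a" "q < a" "p \<noteq> q" for p q
  proof -
    obtain m where "g m = test_vec (p,q)" using gpq[OF pq] by blast
    then show ?thesis using d1[of m] rep[of m m] by (simp add: hform_def)
  qed
  then have Mid: "M q p = (if q = p then 1 else 0)" if "p < a" "q < a" for p q
    using test_vec_forms_identity[of M a] d1 that unfolding M_def by blast
  show ?thesis
  proof (intro ext)
    fix l m
    have "C1 l m = (\<Sum>q<a. \<Sum>p<a. if p = q then cnj (g l q) * g m q else 0)"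
      unfolding rep by (intro sum.cong refl) (simp add: Mid)
    also have "\<dots> = gram a g l m" unfolding gram_def by (simp add: sum.delta)
    finally show "C1 l m = gram a g l m" .
  qed
qed

lemma gram_extreme:
  fixes g :: "'n::finite \<Rightarrow> nat \<Rightarrow> complex" and b :: "nat \<Rightarrow> 'n"
  assumes frame: "test_frame a g b"
    and P1: "psd_kernel C1" and P2: "psd_kernel C2" and d1: "\<And>j. C1 j j = 1" and d2: "\<And>j. C2 j j = 1"
    and t: "0 < t" "t < 1"
    and comb: "\<And>j k. gram a g j k = complex_of_real t * C1 j k + complex_of_real (1-t) * C2 j k"
  shows "C1 = gram a g" "C2 = gram a g"
proof -
  show "C1 = gram a g" by (rule gram_extreme_component[OF frame P1 P2 d1 t comb])
  have comb': "gram a g j k = complex_of_real (1-t) * C2 j k + complex_of_real (1-(1-t)) * C1 j k" for j k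
    using comb[of j k] by simp
  show "C2 = gram a g" by (rule gram_extreme_component[OF frame P2 P1 d2 _ _ comb']) (use t in auto)
qed

definition matrix_unit :: "'n::finite \<Rightarrow> 'n \<Rightarrow> complex^'n^'n" where
  "matrix_unit j k = (\<chi> x y. if x = j \<and> y = k then 1 else 0)"

definition schur :: "('n::finite \<Rightarrow> 'n \<Rightarrow> complex) \<Rightarrow> complex^'n^'n \<Rightarrow> complex^'n^'n" where
  "schur C A = (\<chi> j k. C j k * A $ j $ k)"

lemma matrix_unit_nth[simp]: "matrix_unit j k $ x $ y = (if x = j \<and> y = k then 1 else 0)"
  by (simp add: matrix_unit_def)

lemma schur_nth[simp]: "schur C A $ j $ k = C j k * A $ j $ k"
  by (simp add: schur_def)

lemma cscaleM_nth[simp]: "cscaleM c A $ i $ j = c * A $ i $ j"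
  by (simp add: cscaleM_def)

lemma adj_nth[simp]: "adj A $ i $ j = cnj (A $ j $ i)"
  by (simp add: adj_def)

lemma scaleR_nth2[simp]: "(t *\<^sub>R M) $ i $ j = complex_of_real t * (M $ i $ j :: complex)"
  by (simp only: vector_scaleR_component) (simp add: scaleR_conv_of_real)

lemma psd_iff_psd_kernel: "psd (X::complex^'n::finite^'n) \<longleftrightarrow> psd_kernel (\<lambda>j k. X $ j $ k)"
proof -
  have eq: "(\<Sum>i\<in>UNIV. cnj (x $ i) * (X *v x) $ i) = qform (\<lambda>j k. X $ j $ k) (\<lambda>i. x $ i) (\<lambda>i. x $ i)" for x
    by (simp add: qform_def matrix_vector_mult_def sum_distrib_left ac_simps)
  show ?thesis
  proof
    assume "psd X"
    show "psd_kernel (\<lambda>j k. X $ j $ k)" unfolding psd_kernel_def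
    proof
      fix x :: "'n \<Rightarrow> complex"
      have "cnonneg (\<Sum>i\<in>UNIV. cnj ((\<chi> i. x i) $ i) * (X *v (\<chi> i. x i)) $ i)"
        using \<open>psd X\<close> unfolding psd_def by blast
      then show "cnonneg (qform (\<lambda>j k. X $ j $ k) x x)" using eq[of "\<chi> i. x i"] by simp
    qed
  next
    assume "psd_kernel (\<lambda>j k. X $ j $ k)"
    then show "psd X" unfolding psd_kernel_def psd_def using eq by simp
  qed
qed

lemma matrix_unit_psd: "psd (matrix_unit j j)"
proof -
  have "qform (\<lambda>a b. matrix_unit j j $ a $ b) x x
      = (\<Sum>a\<in>UNIV. \<Sum>b\<in>UNIV. if a = j \<and> b = j then cnj (x a) * x b else 0)" for x
    unfolding qform_def by (intro sum.cong refl) simp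
  then show ?thesis by (simp only: psd_iff_psd_kernel psd_kernel_def dsum_and cnonneg_normsq) simp
qed

definition ones_mat :: "complex^'n::finite^'n" where
  "ones_mat = (\<chi> j k. 1)"

lemma ones_mat_psd: "psd ones_mat"
proof -
  have eq: "qform (\<lambda>a b. ones_mat $ a $ b) x x = cnj (\<Sum>j\<in>UNIV. x j) * (\<Sum>j\<in>UNIV. x j)" for x
    by (simp add: qform_def ones_mat_def cnj_sum sum_product)
  have "psd_kernel (\<lambda>a b. ones_mat $ a $ b)" unfolding psd_kernel_def eq by (simp del: cnj_sum add: cnonneg_normsq)
  then show ?thesis by (simp add: psd_iff_psd_kernel)
qed

lemma matrix_unit_expansion: "A = (\<Sum>j\<in>UNIV. \<Sum>k\<in>UNIV. cscaleM (A $ j $ k) (matrix_unit j k))"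
proof -
  have "(\<Sum>j\<in>UNIV. \<Sum>k\<in>UNIV. cscaleM (A $ j $ k) (matrix_unit j k)) $ x $ y
      = (\<Sum>j\<in>UNIV. \<Sum>k\<in>UNIV. if j = x \<and> k = y then A $ j $ k else 0)" for x y
    by (simp add: sum_component) (intro sum.cong refl, auto)
  then show ?thesis by (simp add: vec_eq_iff dsum_and)
qed

lemma mat1_sum_units: "(mat 1 :: complex^'n::finite^'n) = (\<Sum>j\<in>UNIV. matrix_unit j j)"
proof -
  have "(\<Sum>j\<in>UNIV. matrix_unit j j) $ a $ b = (mat 1 :: complex^'n^'n) $ a $ b" for a b
  proof -
    have "(\<Sum>j\<in>UNIV. matrix_unit j j) $ a $ b = (\<Sum>j\<in>UNIV. if j = a then (if a = b then 1 else 0) else 0)"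
      by (simp only: sum_component) (intro sum.cong refl, auto)
    then show ?thesis by (simp add: sum.delta mat_def)
  qed
  then show ?thesis by (simp add: vec_eq_iff)
qed

lemma clinear_zero: "clinear_map f \<Longrightarrow> f 0 = 0"
  unfolding clinear_map_def by (metis add_cancel_right_right)

lemma clinear_sum: "clinear_map f \<Longrightarrow> f (\<Sum>x\<in>S. g x) = (\<Sum>x\<in>S. f (g x))"
proof (induction S rule: infinite_finite_induct)
  case (insert x F) then show ?case unfolding clinear_map_def by simp
qed (simp_all add: clinear_zero)

lemma clinear_expand: "clinear_map f \<Longrightarrow> f A = (\<Sum>j\<in>UNIV. \<Sum>k\<in>UNIV. cscaleM (A $ j $ k) (f (matrix_unit j k)))"
  by (subst matrix_unit_expansion[of A]) (simp add: clinear_sum, simp add: clinear_map_def)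

lemma sum_delta_mult_left: "(\<Sum>j\<in>(UNIV::'n::finite set). (if j = b then 1 else 0) * f j) = (f b :: complex)"
  by (simp add: if_distrib[of "\<lambda>x. x * _"] sum.delta cong: if_cong)

lemma sum_delta_mult_right: "(\<Sum>j\<in>(UNIV::'n::finite set). f j * (if j = a then d else 0)) = f a * (d :: complex)"
  by (simp add: if_distrib[of "\<lambda>x. _ * x"] sum.delta cong: if_cong)

lemma matrix_unit_mult_vec: "(matrix_unit a b *v v) $ i = (if i = a then v $ b else 0)"
  unfolding matrix_vector_mult_def by (simp add: sum_delta_mult_left)

definition block_form :: "nat \<Rightarrow> (nat \<Rightarrow> nat \<Rightarrow> complex^'n::finite^'n) \<Rightarrow> (nat \<Rightarrow> complex^'n) \<Rightarrow> complex" where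
  "block_form k X x = (\<Sum>p<k. \<Sum>q<k. \<Sum>i\<in>UNIV. cnj (x p $ i) * (X p q *v x q) $ i)"

lemma block_psd_iff: "block_psd k X \<longleftrightarrow> (\<forall>x. cnonneg (block_form k X x))"
  unfolding block_psd_def block_form_def ..

lemma block_psd_one: "block_psd 1 (\<lambda>p q. A) \<longleftrightarrow> psd A"
  unfolding block_psd_def psd_def
proof (intro iffI allI)
  fix x :: "complex^'a"
  assume "\<forall>x::nat \<Rightarrow> complex^'a. cnonneg (\<Sum>p<1. \<Sum>q<1. \<Sum>i\<in>UNIV. cnj (x p $ i) * (A *v x q) $ i)"
  then show "cnonneg (\<Sum>i\<in>UNIV. cnj (x $ i) * (A *v x) $ i)" by (auto dest: spec[of _ "\<lambda>_. x"])
qed simp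

lemma block_form_units: "block_form K (\<lambda>p q. matrix_unit (ix p) (ix q)) x = cnj (\<Sum>p<K. x p $ ix p) * (\<Sum>q<K. x q $ ix q)"
proof -
  have "(\<Sum>i\<in>UNIV. cnj (x p $ i) * (matrix_unit (ix p) (ix q) *v x q) $ i) = cnj (x p $ ix p) * x q $ ix q" for p q
    by (simp add: matrix_unit_mult_vec if_distrib[of "\<lambda>z. _ * z"] sum.delta cong: if_cong)
  then show ?thesis unfolding block_form_def by (simp add: cnj_sum sum_product)
qed

lemma block_form_sparse: "block_form K Y (\<lambda>p. \<chi> i. if i = mm p then c p else 0)
   = (\<Sum>p<K. \<Sum>q<K. cnj (c p) * Y p q $ mm p $ mm q * c q)"
proof -
  have mv: "(M *v (\<chi> i. if i = a then d else 0)) $ i = M $ i $ a * d" for M :: "complex^'n^'n" and a d i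
    unfolding matrix_vector_mult_def by (simp add: sum_delta_mult_right)
  have "(\<Sum>i\<in>UNIV. cnj ((\<chi> i. if i = mm p then c p else 0) $ i) * (Y p q *v (\<chi> i. if i = mm q then c q else 0)) $ i)
      = cnj (c p) * Y p q $ mm p $ mm q * c q" for p q
    by (simp add: mv if_distrib[of cnj] if_distrib[of "\<lambda>z. z * _"] sum.delta cong: if_cong)
  then show ?thesis unfolding block_form_def by simp
qed

lemma ucpt_lin: "\<psi> \<in> UCPT \<Longrightarrow> clinear_map \<psi>"
  unfolding UCPT_def by simp

lemma ucpt_pos: assumes "\<psi> \<in> UCPT" "psd A" shows "psd (\<psi> A)"
proof -
  have "block_psd 1 (\<lambda>p q. A)" using assms(2) block_psd_one by blast
  then have "block_psd 1 (\<lambda>p q. \<psi> A)" using assms(1) unfolding UCPT_def completely_positive_def by fastforce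
  then show ?thesis using block_psd_one by blast
qed

(* Schur multiplication by gram a g is the sum of the congruences by the diagonal matrices
   diag (g j r)_j, which makes it completely positive. *)
lemma schur_gram_term:
  "cnj (y $ i) * (schur (gram a g) M *v z) $ i
     = (\<Sum>r<a. cnj ((\<chi> i. g i r * y $ i) $ i) * (M *v (\<chi> i. g i r * z $ i)) $ i)"
proof -
  have "cnj (y $ i) * (schur (gram a g) M *v z) $ i
      = (\<Sum>l\<in>UNIV. \<Sum>r<a. cnj (g i r * y $ i) * (M $ i $ l * (g l r * z $ l)))"
    by (simp add: matrix_vector_mult_def gram_def sum_distrib_left sum_distrib_right ac_simps)
  also have "\<dots> = (\<Sum>r<a. \<Sum>l\<in>UNIV. cnj (g i r * y $ i) * (M $ i $ l * (g l r * z $ l)))"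
    by (rule sum.swap)
  also have "\<dots> = (\<Sum>r<a. cnj ((\<chi> i. g i r * y $ i) $ i) * (M *v (\<chi> i. g i r * z $ i)) $ i)"
    by (simp add: matrix_vector_mult_def sum_distrib_left)
  finally show ?thesis .
qed

lemma block_form_schur_gram:
  "block_form k (\<lambda>p q. schur (gram a g) (X p q)) x = (\<Sum>r<a. block_form k X (\<lambda>p. \<chi> i. g i r * x p $ i))"
proof -
  have "block_form k (\<lambda>p q. schur (gram a g) (X p q)) x
      = (\<Sum>p<k. \<Sum>q<k. \<Sum>i\<in>UNIV. \<Sum>r<a. cnj ((\<chi> i. g i r * x p $ i) $ i) * (X p q *v (\<chi> i. g i r * x q $ i)) $ i)"
    unfolding block_form_def by (simp only: schur_gram_term)
  also have "\<dots> = (\<Sum>p<k. \<Sum>q<k. \<Sum>r<a. \<Sum>i\<in>UNIV. cnj ((\<chi> i. g i r * x p $ i) $ i) * (X p q *v (\<chi> i. g i r * x q $ i)) $ i)"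
    by (intro sum.cong refl sum.swap)
  also have "\<dots> = (\<Sum>p<k. \<Sum>r<a. \<Sum>q<k. \<Sum>i\<in>UNIV. cnj ((\<chi> i. g i r * x p $ i) $ i) * (X p q *v (\<chi> i. g i r * x q $ i)) $ i)"
    by (intro sum.cong refl sum.swap)
  also have "\<dots> = (\<Sum>r<a. block_form k X (\<lambda>p. \<chi> i. g i r * x p $ i))"
    unfolding block_form_def by (rule sum.swap)
  finally show ?thesis .
qed

lemma schur_gram_cp: "completely_positive (schur (gram a g))"
  unfolding completely_positive_def block_psd_iff
  by (auto simp: block_form_schur_gram intro!: cnonneg_sum)

lemma schur_clinear: "clinear_map (schur C)"
  unfolding clinear_map_def by (simp add: vec_eq_iff algebra_simps)

lemma schur_unital: assumes "\<And>j. C j j = 1" shows "schur C (mat 1) = mat 1"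
  using assms by (simp add: vec_eq_iff mat_def)

lemma schur_trace: assumes "\<And>j. C j j = 1" shows "ntr (schur C A) = ntr A"
  using assms by (simp add: ntr_def)

lemma schur_gram_UCPT:
  assumes "\<And>j. gram a g j j = 1"
  shows "schur (gram a g) \<in> UCPT"
  unfolding UCPT_def using schur_gram_cp schur_clinear schur_unital[of "gram a g", OF assms] schur_trace[of "gram a g", OF assms] by auto

definition kraus_diag :: "('n::finite \<Rightarrow> nat \<Rightarrow> complex) \<Rightarrow> nat \<Rightarrow> complex^'n^'n" where
  "kraus_diag g r = (\<chi> j k. if j = k then g j r else 0)"

lemma kraus_diag_congruence_nth:
  "(adj (kraus_diag g r) ** A ** kraus_diag g r) $ j $ k = cnj (g j r) * A $ j $ k * g k r"
proof -
  have "(adj (kraus_diag g r) ** A) $ j $ l = cnj (g j r) * A $ j $ l" for l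
    by (simp add: matrix_matrix_mult_def kraus_diag_def if_distrib[of cnj] if_distrib[of "\<lambda>x. x * _"] sum.delta cong: if_cong)
  then show ?thesis
    by (simp add: matrix_matrix_mult_def kraus_diag_def if_distrib[of "\<lambda>x. _ * x"] sum.delta' cong: if_cong)
qed

lemma kraus_diag_schur: "(\<lambda>A. \<Sum>r<a. adj (kraus_diag g r) ** A ** kraus_diag g r) = schur (gram a g)"
proof
  fix A :: "complex^'a^'a"
  show "(\<Sum>r<a. adj (kraus_diag g r) ** A ** kraus_diag g r) = schur (gram a g) A"
    by (simp add: vec_eq_iff sum_component kraus_diag_congruence_nth gram_def sum_distrib_right sum_distrib_left ac_simps)
qed

lemma kraus_diag_adj_mult_sum:
  assumes "\<And>j. gram a g j j = 1"
  shows "(\<Sum>r<a. adj (kraus_diag g r) ** kraus_diag g r) = mat 1"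
proof -
  have "(\<Sum>r<a. adj (kraus_diag g r) ** kraus_diag g r) = schur (gram a g) (mat 1)"
    using fun_cong[OF kraus_diag_schur[where a=a and g=g], of "mat 1"] by simp
  then show ?thesis using schur_unital[of "gram a g"] assms by simp
qed

lemma kraus_diag_mult_adj_sum:
  assumes "\<And>j. gram a g j j = 1"
  shows "(\<Sum>r<a. kraus_diag g r ** adj (kraus_diag g r)) = mat 1"
proof -
  have e: "(kraus_diag g r ** adj (kraus_diag g r)) $ j $ k = (if j = k then cnj (g j r) * g j r else 0)" for r j k
    by (simp add: matrix_matrix_mult_def kraus_diag_def if_distrib[of cnj] if_distrib[of "\<lambda>x. x * _"] sum.delta ac_simps cong: if_cong)
  show ?thesis
    using assms by (simp add: vec_eq_iff sum_component e mat_def gram_def)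
qed

lemma ucpt_convex_fix_unit:
  assumes y: "y \<in> UCPT" and z: "z \<in> UCPT" and t: "0 < t" "t < 1"
    and comb: "\<And>A. \<phi> A = t *\<^sub>R y A + (1-t) *\<^sub>R z A" and fx: "\<phi> (matrix_unit j j) = matrix_unit j j"
    and ml: "\<not> (m = j \<and> l = j)"
  shows "y (matrix_unit j j) $ m $ l = 0 \<and> z (matrix_unit j j) $ m $ l = 0"
proof -
  define P where "P a b = y (matrix_unit j j) $ a $ b" for a b
  define Q where "Q a b = z (matrix_unit j j) $ a $ b" for a b
  have fP: "psd_kernel P" unfolding P_def using ucpt_pos[OF y matrix_unit_psd] psd_iff_psd_kernel by blast
  have fQ: "psd_kernel Q" unfolding Q_def using ucpt_pos[OF z matrix_unit_psd] psd_iff_psd_kernel by blast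
  have zero: "P r r = 0 \<and> Q r r = 0" if "r \<noteq> j" for r
  proof -
    have "matrix_unit j j $ r $ r = complex_of_real t * P r r + complex_of_real (1-t) * Q r r"
      using comb[of "matrix_unit j j"] fx unfolding P_def Q_def by (metis scaleR_nth2 vector_add_component)
    then have "complex_of_real t * P r r + complex_of_real (1-t) * Q r r = 0" using that by simp
    then show ?thesis using cnonneg_convex_zero psd_kernel_diag[OF fP] psd_kernel_diag[OF fQ] t by blast
  qed
  show ?thesis
  proof (cases "m = j")
    case False
    then show ?thesis using zero[OF False] psd_kernel_zero_diag[OF fP, of m] psd_kernel_zero_diag[OF fQ, of m]
      unfolding P_def Q_def by blast
  next
    case True
    with ml have "l \<noteq> j" by simp
    then show ?thesis using zero[of l] psd_kernel_zero_diag[OF fP, of l] psd_kernel_zero_diag[OF fQ, of l]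
      unfolding P_def Q_def by blast
  qed
qed

(* Unitality then pins the remaining entry down: such a UCPT map fixes every E_jj. *)
lemma ucpt_fixes_units:
  assumes y: "y \<in> UCPT" and off: "\<And>j m l. \<not> (m = j \<and> l = j) \<Longrightarrow> y (matrix_unit j j) $ m $ l = 0"
  shows "y (matrix_unit j j) = matrix_unit j j"
proof -
  have "y (mat 1) = mat 1" using y unfolding UCPT_def by simp
  moreover have "y (mat 1) = (\<Sum>i\<in>UNIV. y (matrix_unit i i))"
    by (simp only: mat1_sum_units clinear_sum[OF ucpt_lin[OF y]])
  ultimately have "(\<Sum>i\<in>UNIV. y (matrix_unit i i)) $ j $ j = (mat 1 :: complex^'a^'a) $ j $ j" by simp
  then have "(\<Sum>i\<in>UNIV. y (matrix_unit i i) $ j $ j) = 1" by (simp add: sum_component mat_def)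
  moreover have "(\<Sum>i\<in>UNIV. y (matrix_unit i i) $ j $ j) = (\<Sum>i\<in>UNIV. if i = j then y (matrix_unit j j) $ j $ j else 0)"
    by (intro sum.cong refl) (auto simp: off)
  ultimately have "y (matrix_unit j j) $ j $ j = 1" by (simp add: sum.delta)
  then show ?thesis by (auto simp: vec_eq_iff off)
qed

lemma sum_less_2: "(\<Sum>p<2. f p) = f 0 + f (1::nat)"
  by (simp add: numeral_2_eq_2)

(* A UCPT map fixing all E_jj maps each E_jk into the line spanned by E_jk: apply
   2-positivity to the positive block matrix (E_jj, E_jk; E_kj, E_kk). *)
lemma ucpt_unit_support:
  assumes y: "y \<in> UCPT" and d: "\<And>j. y (matrix_unit j j) = matrix_unit j j" and ml: "\<not> (m = j \<and> l = k)"
  shows "y (matrix_unit j k) $ m $ l = 0"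
proof (cases "j = k")
  case True
  then show ?thesis using d ml by auto
next
  case jk: False
  define ix where "ix p = (if p = 0 then j else k)" for p :: nat
  have "block_psd 2 (\<lambda>p q. matrix_unit (ix p) (ix q))"
    unfolding block_psd_iff block_form_units by (simp del: cnj_sum add: cnonneg_normsq)
  then have bp: "block_psd 2 (\<lambda>p q. y (matrix_unit (ix p) (ix q)))"
    using y unfolding UCPT_def completely_positive_def by blast
  define B where "B = y (matrix_unit j k) $ m $ l"
  define W where "W = y (matrix_unit k j) $ l $ m"
  define mm where "mm p = (if p = 0 then m else l)" for p :: nat
  have val: "cnonneg (cnj c0 * c0 * matrix_unit j j $ m $ m + cnj c0 * B * c1 + cnj c1 * W * c0 + cnj c1 * c1 * matrix_unit k k $ l $ l)" for c0 c1
  proof -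
    define c where "c p = (if p = 0 then c0 else c1)" for p :: nat
    have "cnonneg (block_form 2 (\<lambda>p q. y (matrix_unit (ix p) (ix q))) (\<lambda>p. \<chi> i. if i = mm p then c p else 0))"
      using bp unfolding block_psd_iff by blast
    then show ?thesis unfolding block_form_sparse sum_less_2
      using jk by (simp add: ix_def mm_def c_def d B_def W_def algebra_simps)
  qed
  show ?thesis
  proof (cases "m = j")
    case False
    have "cnonneg (cnj c * B + c * W + matrix_unit k k $ l $ l)" for c
      using val[of c 1] False by (simp add: algebra_simps)
    then show ?thesis using cnonneg_affine_zero B_def by blast
  next
    case True
    with ml have "l \<noteq> k" by simp
    have "cnonneg (cnj c * W + c * B + matrix_unit j j $ m $ m)" for c
      using val[of 1 c] \<open>l \<noteq> k\<close> by (simp add: algebra_simps)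
    then show ?thesis using cnonneg_affine_zero B_def by blast
  qed
qed

lemma ucpt_fixing_units_is_schur:
  assumes y: "y \<in> UCPT" and d: "\<And>j. y (matrix_unit j j) = matrix_unit j j"
  shows "y = schur (\<lambda>j k. y (matrix_unit j k) $ j $ k)"
proof
  fix A :: "complex^'a^'a"
  have "y A $ m $ l = A $ m $ l * y (matrix_unit m l) $ m $ l" for m l
  proof -
    have "y A $ m $ l = (\<Sum>j\<in>UNIV. \<Sum>k\<in>UNIV. A $ j $ k * y (matrix_unit j k) $ m $ l)"
      by (subst clinear_expand[OF ucpt_lin[OF y]]) (simp add: sum_component)
    also have "\<dots> = (\<Sum>j\<in>UNIV. \<Sum>k\<in>UNIV. if j = m \<and> k = l then A $ j $ k * y (matrix_unit j k) $ m $ l else 0)"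
      by (intro sum.cong refl) (auto simp: ucpt_unit_support[OF y d])
    also have "\<dots> = A $ m $ l * y (matrix_unit m l) $ m $ l" by (rule dsum_and)
    finally show ?thesis .
  qed
  then show "y A = schur (\<lambda>j k. y (matrix_unit j k) $ j $ k) A" by (simp add: vec_eq_iff mult.commute)
qed

(* The symbol of a positive Schur multiplier is a positive kernel (its image of ones_mat). *)
lemma schur_symbol_psd:
  assumes "schur C \<in> UCPT"
  shows "psd_kernel C"
proof -
  have "psd (schur C ones_mat)" using ucpt_pos[OF assms ones_mat_psd] .
  moreover have "(\<lambda>j k. schur C ones_mat $ j $ k) = C" by (simp add: ones_mat_def fun_eq_iff)
  ultimately show ?thesis unfolding psd_iff_psd_kernel by simp
qed

(* Extremality in UCPT: both parts of a convex decomposition of schur (gram a g) fix the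
   diagonal matrix units, hence are Schur multipliers, whose symbols decompose gram a g
   into correlation matrices; by gram_extreme both symbols equal gram a g. *)
lemma schur_gram_extreme:
  fixes g :: "'n::finite \<Rightarrow> nat \<Rightarrow> complex" and b :: "nat \<Rightarrow> 'n"
  assumes frame: "test_frame a g b" and unit: "\<And>j. gram a g j j = 1"
  shows "extreme_in UCPT (schur (gram a g))"
  unfolding extreme_in_def
proof (intro conjI ballI allI impI)
  show "schur (gram a g) \<in> UCPT" by (rule schur_gram_UCPT[OF unit])
  fix y z and t :: real
  assume y: "y \<in> UCPT" and z: "z \<in> UCPT"
    and h: "0 < t \<and> t < 1 \<and> schur (gram a g) = (\<lambda>A. t *\<^sub>R y A + (1 - t) *\<^sub>R z A)"
  have t: "0 < t" "t < 1" using h by auto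
  have comb: "\<And>A. schur (gram a g) A = t *\<^sub>R y A + (1 - t) *\<^sub>R z A" using h by metis
  have fx: "schur (gram a g) (matrix_unit j j) = matrix_unit j j" for j
    using unit by (simp add: vec_eq_iff)
  have off: "y (matrix_unit j j) $ m $ l = 0 \<and> z (matrix_unit j j) $ m $ l = 0" if "\<not> (m = j \<and> l = j)" for j m l
    by (rule ucpt_convex_fix_unit[OF y z t comb fx that])
  have yd: "y (matrix_unit j j) = matrix_unit j j" for j using ucpt_fixes_units[OF y] off by blast
  have zd: "z (matrix_unit j j) = matrix_unit j j" for j using ucpt_fixes_units[OF z] off by blast
  define C1 where "C1 j k = y (matrix_unit j k) $ j $ k" for j k
  define C2 where "C2 j k = z (matrix_unit j k) $ j $ k" for j k
  have ys: "y = schur C1" unfolding C1_def by (rule ucpt_fixing_units_is_schur[OF y yd])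
  have zs: "z = schur C2" unfolding C2_def by (rule ucpt_fixing_units_is_schur[OF z zd])
  have "gram a g j k = complex_of_real t * C1 j k + complex_of_real (1-t) * C2 j k" for j k
  proof -
    have "schur (gram a g) (matrix_unit j k) $ j $ k = complex_of_real t * C1 j k + complex_of_real (1-t) * C2 j k"
      unfolding comb[of "matrix_unit j k"] C1_def C2_def by (simp only: vector_add_component scaleR_nth2)
    then show ?thesis by simp
  qed
  moreover have "psd_kernel C1" "psd_kernel C2" using schur_symbol_psd y z ys zs by auto
  moreover have "C1 j j = 1" "C2 j j = 1" for j unfolding C1_def C2_def yd zd by simp_all
  ultimately have "C1 = gram a g" "C2 = gram a g" using gram_extreme[OF frame _ _ _ _ t] by blast+
  then show "y = z" using ys zs by simp
qed

(* Any a orthonormal vectors U p in C^k force a <= k: the trace of the projection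
   P = sum_p U_p U_p^* is a, while each of its k diagonal entries is at most 1. *)
lemma orthonormal_family_card_le:
  fixes U :: "nat \<Rightarrow> nat \<Rightarrow> complex"
  assumes orth: "\<And>p q. p < a \<Longrightarrow> q < a \<Longrightarrow> (\<Sum>i<k. cnj (U p i) * U q i) = (if p = q then 1 else 0)"
  shows "a \<le> k"
proof -
  define P where "P i j = (\<Sum>p<a. cnj (U p i) * U p j)" for i j
  have Pc: "P j i = cnj (P i j)" for i j unfolding P_def by (simp add: ac_simps)
  have PP: "(\<Sum>j<k. P i j * P j i) = P i i" for i
  proof -
    have "(\<Sum>j<k. P i j * P j i) = (\<Sum>j<k. \<Sum>p<a. \<Sum>q<a. cnj (U p i) * U q i * (U p j * cnj (U q j)))"
      unfolding P_def by (simp add: sum_product ac_simps)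
    also have "\<dots> = (\<Sum>p<a. \<Sum>j<k. \<Sum>q<a. cnj (U p i) * U q i * (U p j * cnj (U q j)))"
      by (rule sum.swap)
    also have "\<dots> = (\<Sum>p<a. \<Sum>q<a. \<Sum>j<k. cnj (U p i) * U q i * (U p j * cnj (U q j)))"
      by (intro sum.cong refl sum.swap)
    also have "\<dots> = (\<Sum>p<a. \<Sum>q<a. cnj (U p i) * U q i * (\<Sum>j<k. cnj (U q j) * U p j))"
      by (simp add: sum_distrib_left ac_simps)
    also have "\<dots> = (\<Sum>p<a. \<Sum>q<a. if q = p then cnj (U p i) * U p i else 0)"
      by (intro sum.cong refl) (simp add: orth)
    also have "\<dots> = P i i" unfolding P_def by simp
    finally show ?thesis .
  qed
  have Pr: "Im (P i i) = 0" "0 \<le> Re (P i i)" for i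
    unfolding P_def by (simp_all add: Im_sum Re_sum complex_mult_cnj sum_nonneg)
  have le1: "Re (P i i) \<le> 1" if "i < k" for i
  proof -
    have "Re (\<Sum>j<k. P i j * P j i) = (\<Sum>j<k. (cmod (P i j))^2)"
      by (simp add: Re_sum Pc[of _ i] complex_mult_cnj cmod_power2)
    also have "\<dots> \<ge> (cmod (P i i))^2"
      using that by (intro member_le_sum) auto
    finally have "(cmod (P i i))^2 \<le> Re (P i i)" unfolding PP .
    moreover have "cmod (P i i) = Re (P i i)" using Pr[of i] by (simp add: cmod_def)
    ultimately have "Re (P i i) * Re (P i i) \<le> Re (P i i) * 1" by (simp add: power2_eq_square)
    then show ?thesis using Pr[of i] by (cases "Re (P i i) = 0") (simp_all add: mult_le_cancel_left)
  qed
  have "of_nat a = (\<Sum>p<a. \<Sum>i<k. cnj (U p i) * U p i)"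
    by (simp add: orth)
  also have "\<dots> = (\<Sum>i<k. P i i)" unfolding P_def by (rule sum.swap)
  finally have "real a = (\<Sum>i<k. Re (P i i))" by (metis Re_complex_of_real Re_sum of_real_of_nat_eq)
  also have "\<dots> \<le> (\<Sum>i<k. 1)" by (intro sum_mono le1) auto
  finally show ?thesis by simp
qed

lemma gram_at_basis:
  assumes gb: "\<And>p. p < a \<Longrightarrow> g (b p) = (\<lambda>i. if i = p then 1 else 0)" and p: "p < a"
  shows "gram a g (b p) u = g u p"
proof -
  have "gram a g (b p) u = (\<Sum>i<a. if i = p then g u i else 0)"
    unfolding gram_def using gb[OF p] by (intro sum.cong refl) auto
  then show ?thesis using p by simp
qed

lemma congruence_matrix_unit_nth: "(adj W ** matrix_unit x y ** W) $ u $ v = cnj (W $ x $ u) * W $ y $ v"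
proof -
  have "(adj W ** matrix_unit x y) $ u $ l = (if l = y then cnj (W $ x $ u) else 0)" for l
    by (simp add: matrix_matrix_mult_def if_distrib[of "\<lambda>z. _ * z"] sum.delta cong: if_cong)
  then show ?thesis
    by (simp add: matrix_matrix_mult_def if_distrib[of "\<lambda>z. z * _"] sum.delta cong: if_cong)
qed

(* The diagonal Kraus operators are independent (read them at the entries (b p, b p)), and
   any Kraus family w of the same channel yields a orthonormal vectors (w_i (b p, b p))_i,
   so it has at least a members. *)
lemma kraus_rank_kraus_diag:
  fixes g :: "'n::finite \<Rightarrow> nat \<Rightarrow> complex" and b :: "nat \<Rightarrow> 'n"
  assumes gb: "\<And>p. p < a \<Longrightarrow> g (b p) = (\<lambda>i. if i = p then 1 else 0)"
  shows "kraus_rank (\<lambda>A. \<Sum>r<a. adj (kraus_diag g r) ** A ** kraus_diag g r) = a"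
proof -
  have indep: "cindep_fam a (kraus_diag g)"
    unfolding cindep_fam_def
  proof (intro allI impI)
    fix c :: "nat \<Rightarrow> complex" and q assume z: "(\<Sum>i<a. cscaleM (c i) (kraus_diag g i)) = 0" and q: "q < a"
    have "(\<Sum>i<a. cscaleM (c i) (kraus_diag g i)) $ b q $ b q = (\<Sum>i<a. if i = q then c i else 0)"
      unfolding sum_component by (intro sum.cong refl) (simp add: kraus_diag_def gb[OF q])
    then show "c q = 0" using z q by simp
  qed
  show ?thesis unfolding kraus_rank_def
  proof (rule Least_equality)
    show "\<exists>w. cindep_fam a w \<and> (\<forall>A. (\<Sum>r<a. adj (kraus_diag g r) ** A ** kraus_diag g r) = (\<Sum>i<a. adj (w i) ** A ** w i))"
      using indep by blast
  next
    fix k assume "\<exists>w. cindep_fam k w \<and> (\<forall>A. (\<Sum>r<a. adj (kraus_diag g r) ** A ** kraus_diag g r) = (\<Sum>i<k. adj (w i) ** A ** w i))"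
    then obtain w where rep: "\<And>A. (\<Sum>r<a. adj (kraus_diag g r) ** A ** kraus_diag g r) = (\<Sum>i<k. adj (w i) ** A ** w i)" by blast
    show "a \<le> k"
    proof (rule orthonormal_family_card_le[where U = "\<lambda>p i. w i $ b p $ b p"])
      fix p q assume pq: "p < a" "q < a"
      have "(\<Sum>r<a. adj (kraus_diag g r) ** matrix_unit (b p) (b q) ** kraus_diag g r) $ b p $ b q = gram a g (b p) (b q)"
        using kraus_diag_schur[where a=a and g=g] by (simp add: fun_eq_iff)
      also have "\<dots> = (if p = q then 1 else 0)" using gram_at_basis[where a=a and g=g and b=b, OF gb pq(1)] gb[OF pq(2)] by simp
      finally show "(\<Sum>i<k. cnj (w i $ b p $ b p) * w i $ b q $ b q) = (if p = q then 1 else 0)"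
        unfolding rep by (simp add: sum_component congruence_matrix_unit_nth)
    qed
  qed
qed

(* The candidate state: rho_C(X) = (1/n) sum_{x,u} C x u X_{(x,x),(u,u)}.  It is pi of the
   Schur multiplier with symbol C. *)
definition diag_state :: "('n::finite \<Rightarrow> 'n \<Rightarrow> complex) \<Rightarrow> complex^('n \<times> 'n)^('n \<times> 'n) \<Rightarrow> complex" where
  "diag_state C X = (\<Sum>x\<in>UNIV. \<Sum>u\<in>UNIV. C x u * X $ (x,x) $ (u,u)) / of_nat CARD('n)"

lemma pair_sum: "(\<Sum>p\<in>(UNIV::('n::finite \<times> 'm::finite) set). f p) = (\<Sum>x\<in>UNIV. \<Sum>y\<in>UNIV. f (x,y))"
  by (simp add: sum.cartesian_product)

lemma diag_pair_sum: "(\<Sum>p\<in>(UNIV::('n::finite \<times> 'n) set). if fst p = snd p then f (fst p) else 0) = (\<Sum>x\<in>UNIV. (f x :: complex))"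
  unfolding pair_sum by (simp add: sum.delta)

lemma diag_state_clinear: "clinear_functional (diag_state C)"
  unfolding clinear_functional_def diag_state_def
  by (simp add: algebra_simps sum.distrib sum_distrib_left add_divide_distrib)

lemma diag_state_kron: "diag_state C (kron A B) = ntr (schur C A ** transpose B)"
proof -
  have "(schur C A ** transpose B) $ i $ i = (\<Sum>k\<in>UNIV. C i k * (A $ i $ k * B $ i $ k))" for i
    by (simp add: matrix_matrix_mult_def transpose_def mult.assoc)
  then show ?thesis unfolding diag_state_def ntr_def by (simp add: kron_def)
qed

lemma cfun_zero: "clinear_functional f \<Longrightarrow> f 0 = 0"
  unfolding clinear_functional_def by (metis add_cancel_right_right)

lemma cfun_sum: "clinear_functional f \<Longrightarrow> f (\<Sum>x\<in>S. g x) = (\<Sum>x\<in>S. f (g x))"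
proof (induction S rule: infinite_finite_induct)
  case (insert x F) then show ?case unfolding clinear_functional_def by simp
qed (simp_all add: cfun_zero)

lemma cfun_expand: "clinear_functional f \<Longrightarrow> f X = (\<Sum>p\<in>UNIV. \<Sum>q\<in>UNIV. X $ p $ q * f (matrix_unit p q))"
  by (subst matrix_unit_expansion[of X]) (simp add: cfun_sum, simp add: clinear_functional_def)

lemma matrix_unit_kron:
  "(matrix_unit p q :: complex^('n::finite \<times> 'n)^('n \<times> 'n)) = kron (matrix_unit (fst p) (fst q)) (matrix_unit (snd p) (snd q))"
  by (simp add: vec_eq_iff kron_def prod_eq_iff)

(* Elementary tensors span M_n (x) M_n, so linear functionals agreeing on them coincide. *)
lemma cfun_eq_on_kron:
  assumes "clinear_functional f" "clinear_functional h"
    and "\<And>A B. f (kron A B) = h (kron A B)"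
  shows "f = (h :: complex^('n::finite \<times> 'n)^('n \<times> 'n) \<Rightarrow> complex)"
proof
  fix X
  have "f (matrix_unit p q) = h (matrix_unit p q)" for p q using assms(3) matrix_unit_kron by metis
  then show "f X = h X" using cfun_expand[OF assms(1), of X] cfun_expand[OF assms(2), of X] by simp
qed

lemma pi_map_schur: "pi_map (schur C) = diag_state C"
  unfolding pi_map_def
proof (rule the_equality)
  show "clinear_functional (diag_state C) \<and> (\<forall>A B. diag_state C (kron A B) = ntr (schur C A ** transpose B))"
    using diag_state_clinear diag_state_kron by blast
next
  fix \<rho> assume h: "clinear_functional \<rho> \<and> (\<forall>A B. \<rho> (kron A B) = ntr (schur C A ** transpose B))"
  show "\<rho> = diag_state C"
  proof (rule cfun_eq_on_kron)
    show "clinear_functional \<rho>" using h by blast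
    show "clinear_functional (diag_state C)" by (rule diag_state_clinear)
    show "\<rho> (kron A B) = diag_state C (kron A B)" for A B using h diag_state_kron[of C A B] by simp
  qed
qed

lemma qform_diag_pairs:
  "qform P (\<lambda>p. if fst p = snd p then w (fst p) else 0) (\<lambda>p. if fst p = snd p then w (fst p) else 0)
   = (\<Sum>x\<in>UNIV. \<Sum>u\<in>UNIV. cnj (w x) * P (x,x) (u,u) * w u)"
  (is "qform P ?y ?y = _")
proof -
  define G where "G x u = cnj (w x) * P (x,x) (u,u) * w u" for x u
  define F where "F x q = (if fst q = snd q then G x (fst q) else 0)" for x q
  have t: "cnj (?y p) * P p q * ?y q = (if fst p = snd p then F (fst p) q else 0)" for p q
    unfolding F_def G_def by (cases p, cases q) auto
  have "(\<Sum>q\<in>UNIV. F x q) = (\<Sum>u\<in>UNIV. G x u)" for x unfolding F_def by (rule diag_pair_sum)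
  then have i: "(\<Sum>q\<in>UNIV. (if fst p = snd p then F (fst p) q else 0)) = (if fst p = snd p then (\<Sum>u\<in>UNIV. G (fst p) u) else 0)" for p
    by (cases "fst p = snd p") simp_all
  have "qform P ?y ?y = (\<Sum>x\<in>UNIV. \<Sum>u\<in>UNIV. G x u)" unfolding qform_def t i by (rule diag_pair_sum)
  then show ?thesis unfolding G_def .
qed

(* Positivity of rho_C for a Gram symbol: rho_C(X) is a sum of values of the form of X. *)
lemma diag_state_gram_pos:
  assumes X: "psd X"
  shows "cnonneg (diag_state (gram a g) X)"
proof -
  have "(\<Sum>x\<in>UNIV. \<Sum>u\<in>UNIV. gram a g x u * X $ (x,x) $ (u,u))
      = (\<Sum>x\<in>UNIV. \<Sum>u\<in>UNIV. \<Sum>r<a. cnj (g x r) * X $ (x,x) $ (u,u) * g u r)"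
    unfolding gram_def by (simp add: sum_distrib_right sum_distrib_left ac_simps)
  also have "\<dots> = (\<Sum>x\<in>UNIV. \<Sum>r<a. \<Sum>u\<in>UNIV. cnj (g x r) * X $ (x,x) $ (u,u) * g u r)"
    by (intro sum.cong refl sum.swap)
  also have "\<dots> = (\<Sum>r<a. \<Sum>x\<in>UNIV. \<Sum>u\<in>UNIV. cnj (g x r) * X $ (x,x) $ (u,u) * g u r)"
    by (rule sum.swap)
  also have "\<dots> = (\<Sum>r<a. qform (\<lambda>p q. X $ p $ q) (\<lambda>p. if fst p = snd p then g (fst p) r else 0) (\<lambda>p. if fst p = snd p then g (fst p) r else 0))"
    using qform_diag_pairs[of "\<lambda>p q. X $ p $ q" "\<lambda>x. g x _"] by simp
  also have "cnonneg \<dots>" using X psd_iff_psd_kernel unfolding psd_kernel_def by (intro cnonneg_sum) blast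
  finally show ?thesis unfolding diag_state_def by (rule cnonneg_div)
qed

lemma ntr_transpose: "ntr (transpose B) = ntr B"
  by (simp add: ntr_def transpose_def)

lemma diag_state_gram_Gamma:
  fixes g :: "'n::finite \<Rightarrow> nat \<Rightarrow> complex"
  assumes unit: "\<And>j. gram a g j j = 1"
  shows "diag_state (gram a g) \<in> Gamma_mts"
  unfolding Gamma_mts_def is_state_def
proof (intro CollectI conjI allI impI)
  show "clinear_functional (diag_state (gram a g))" by (rule diag_state_clinear)
  show "cnonneg (diag_state (gram a g) X)" if "psd X" for X using that by (rule diag_state_gram_pos)
  have "(\<Sum>x\<in>UNIV. \<Sum>u\<in>UNIV. gram a g x u * (mat 1 :: complex^('n\<times>'n)^('n\<times>'n)) $ (x,x) $ (u,u))
      = (\<Sum>x\<in>UNIV. \<Sum>u\<in>UNIV. if u = x then gram a g x x else 0)"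
    by (intro sum.cong refl) (auto simp: mat_def)
  then show "diag_state (gram a g) (mat 1) = 1" unfolding diag_state_def by (simp add: unit)
  show "diag_state (gram a g) (kron A (mat 1)) = ntr A" for A :: "complex^'n^'n"
    unfolding diag_state_kron by (simp add: transpose_mat schur_trace[of "gram a g", OF unit])
  show "diag_state (gram a g) (kron (mat 1) A) = ntr A" for A :: "complex^'n^'n"
    unfolding diag_state_kron by (simp add: schur_unital[of "gram a g", OF unit] ntr_transpose)
qed

lemma diag_state_matrix_unit:
  fixes C :: "'n::finite \<Rightarrow> 'n \<Rightarrow> complex"
  shows "diag_state C (matrix_unit (x,y) (u,v)) = (if x = y \<and> u = v then C x u / of_nat CARD('n) else 0)"
proof (cases "x = y \<and> u = v")
  case True
  have "(\<Sum>x'\<in>UNIV. \<Sum>u'\<in>UNIV. C x' u' * (matrix_unit (x,y) (u,v) :: complex^('n\<times>'n)^('n\<times>'n)) $ (x',x') $ (u',u'))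
      = (\<Sum>x'\<in>UNIV. \<Sum>u'\<in>UNIV. if x' = x \<and> u' = u then C x' u' else 0)"
    using True by (intro sum.cong refl) auto
  then show ?thesis using True unfolding diag_state_def by (simp add: dsum_and)
next
  case False
  then have "(\<Sum>x'\<in>UNIV. \<Sum>u'\<in>UNIV. C x' u' * (matrix_unit (x,y) (u,v) :: complex^('n\<times>'n)^('n\<times>'n)) $ (x',x') $ (u',u')) = 0"
    by (intro sum.neutral ballI) auto
  then show ?thesis using False unfolding diag_state_def by auto
qed

lemma gamma_lin: "\<rho> \<in> Gamma_mts \<Longrightarrow> clinear_functional \<rho>"
  unfolding Gamma_mts_def is_state_def by simp

lemma gamma_psd_kernel:
  fixes \<rho> :: "complex^('n::finite\<times>'n)^('n\<times>'n) \<Rightarrow> complex"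
  assumes r: "\<rho> \<in> Gamma_mts"
  shows "psd_kernel (\<lambda>p q. \<rho> (matrix_unit p q))"
  unfolding psd_kernel_def
proof
  fix z :: "'n \<times> 'n \<Rightarrow> complex"
  define X :: "complex^('n\<times>'n)^('n\<times>'n)" where "X = (\<chi> p q. cnj (z p) * z q)"
  have "qform (\<lambda>p q. X $ p $ q) w w = (\<Sum>p\<in>UNIV. \<Sum>q\<in>UNIV. cnj (z p * w p) * (z q * w q))" for w
    unfolding qform_def X_def by (simp add: ac_simps)
  also have "\<dots> w = cnj (\<Sum>p\<in>UNIV. z p * w p) * (\<Sum>q\<in>UNIV. z q * w q)" for w
    by (simp add: sum_product)
  finally have "qform (\<lambda>p q. X $ p $ q) w w = cnj (\<Sum>p\<in>UNIV. z p * w p) * (\<Sum>q\<in>UNIV. z q * w q)" for w .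
  then have "psd X" unfolding psd_iff_psd_kernel psd_kernel_def by (simp del: cnj_sum add: cnonneg_normsq)
  then have "cnonneg (\<rho> X)" using r unfolding Gamma_mts_def is_state_def by simp
  moreover have "\<rho> X = qform (\<lambda>p q. \<rho> (matrix_unit p q)) z z"
  proof -
    have "\<rho> X = (\<Sum>p\<in>UNIV. \<Sum>q\<in>UNIV. X $ p $ q * \<rho> (matrix_unit p q))"
      by (rule cfun_expand[OF gamma_lin[OF r]])
    also have "\<dots> = qform (\<lambda>p q. \<rho> (matrix_unit p q)) z z" unfolding qform_def X_def by (simp add: ac_simps)
    finally show ?thesis .
  qed
  ultimately show "cnonneg (qform (\<lambda>p q. \<rho> (matrix_unit p q)) z z)" by simp
qed

lemma ntr_matrix_unit: "ntr (matrix_unit x x :: complex^'n::finite^'n) = 1 / of_nat CARD('n)"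
proof -
  have "(\<Sum>i\<in>UNIV. (matrix_unit x x :: complex^'n^'n) $ i $ i) = (\<Sum>i\<in>UNIV. if i = x then 1 else 0)"
    by (intro sum.cong refl) auto
  then show ?thesis unfolding ntr_def by simp
qed

(* Let rho_C = t r1 + (1-t) r2 with r1, r2 in Gamma.  Since rho_C vanishes on E_pp for
   off-diagonal pairs p = (x,y), x /= y, positivity kills the whole row and column p of r1. *)
lemma gamma_component_offdiag:
  fixes r1 :: "complex^('n::finite\<times>'n)^('n\<times>'n) \<Rightarrow> complex"
  assumes r1: "r1 \<in> Gamma_mts" and r2: "r2 \<in> Gamma_mts" and t: "0 < t" "t < 1"
    and comb: "\<And>X. diag_state C X = complex_of_real t * r1 X + complex_of_real (1-t) * r2 X"
    and p: "fst p \<noteq> snd p"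
  shows "r1 (matrix_unit p q) = 0 \<and> r1 (matrix_unit q p) = 0"
proof -
  have f1: "psd_kernel (\<lambda>p q. r1 (matrix_unit p q))" by (rule gamma_psd_kernel[OF r1])
  have f2: "psd_kernel (\<lambda>p q. r2 (matrix_unit p q))" by (rule gamma_psd_kernel[OF r2])
  obtain x y where xy: "p = (x,y)" by (cases p)
  have "diag_state C (matrix_unit p p) = 0" using p xy by (simp add: diag_state_matrix_unit)
  then have "complex_of_real t * r1 (matrix_unit p p) + complex_of_real (1-t) * r2 (matrix_unit p p) = 0"
    using comb by simp
  then have "r1 (matrix_unit p p) = 0"
    using cnonneg_convex_zero psd_kernel_diag[OF f1] psd_kernel_diag[OF f2] t by blast
  then show ?thesis using psd_kernel_zero_diag[OF f1, of p] by blast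
qed

(* The first marginal condition then determines the diagonal entries r1(E_(x,x),(x,x)) = 1/n. *)
lemma gamma_diag_value:
  fixes r :: "complex^('n::finite\<times>'n)^('n\<times>'n) \<Rightarrow> complex"
  assumes r: "r \<in> Gamma_mts"
    and off: "\<And>p q. fst p \<noteq> snd p \<Longrightarrow> r (matrix_unit p q) = 0 \<and> r (matrix_unit q p) = 0"
  shows "r (matrix_unit (x,x) (x,x)) = 1 / of_nat CARD('n)"
proof -
  have "r (kron (matrix_unit x x) (mat 1)) = 1 / of_nat CARD('n)"
    using r ntr_matrix_unit[of x] unfolding Gamma_mts_def by simp
  moreover have "r (kron (matrix_unit x x) (mat 1)) = (\<Sum>p\<in>UNIV. \<Sum>q\<in>UNIV. kron (matrix_unit x x) (mat 1) $ p $ q * r (matrix_unit p q))"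
    by (rule cfun_expand[OF gamma_lin[OF r]])
  moreover have "kron (matrix_unit x x) (mat 1) $ p $ q * r (matrix_unit p q)
      = (if p = (x,x) \<and> q = (x,x) then r (matrix_unit (x,x) (x,x)) else 0)" for p q
    using off by (cases p, cases q) (auto simp: kron_def mat_def)
  ultimately show ?thesis by (simp add: dsum_and)
qed

lemma gamma_compression_psd:
  fixes r :: "complex^('n::finite\<times>'n)^('n\<times>'n) \<Rightarrow> complex"
  assumes r: "r \<in> Gamma_mts"
  shows "psd_kernel (\<lambda>x u. of_nat CARD('n) * r (matrix_unit (x,x) (u,u)))"
  unfolding psd_kernel_def
proof
  fix w :: "'n \<Rightarrow> complex"
  have "qform (\<lambda>x u. of_nat CARD('n) * r (matrix_unit (x,x) (u,u))) w w
      = of_nat CARD('n) * qform (\<lambda>p q. r (matrix_unit p q)) (\<lambda>p. if fst p = snd p then w (fst p) else 0) (\<lambda>p. if fst p = snd p then w (fst p) else 0)"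
    unfolding qform_diag_pairs unfolding qform_def by (simp add: sum_distrib_left ac_simps)
  then show "cnonneg (qform (\<lambda>x u. of_nat CARD('n) * r (matrix_unit (x,x) (u,u))) w w)"
    using gamma_psd_kernel[OF r] unfolding psd_kernel_def by (simp add: cnonneg_mult_nat)
qed

lemma gamma_eq_from_diag_pairs:
  fixes r1 :: "complex^('n::finite\<times>'n)^('n\<times>'n) \<Rightarrow> complex"
  assumes r1: "r1 \<in> Gamma_mts" and r2: "r2 \<in> Gamma_mts"
    and off1: "\<And>p q. fst p \<noteq> snd p \<Longrightarrow> r1 (matrix_unit p q) = 0 \<and> r1 (matrix_unit q p) = 0"
    and off2: "\<And>p q. fst p \<noteq> snd p \<Longrightarrow> r2 (matrix_unit p q) = 0 \<and> r2 (matrix_unit q p) = 0"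
    and diag: "\<And>x u. r1 (matrix_unit (x,x) (u,u)) = r2 (matrix_unit (x,x) (u,u))"
  shows "r1 = r2"
proof
  have units: "r1 (matrix_unit p q) = r2 (matrix_unit p q)" for p q
  proof (cases "fst p = snd p \<and> fst q = snd q")
    case True
    then show ?thesis using diag[of "fst p" "fst q"] by (cases p, cases q) simp
  next
    case False
    then show ?thesis using off1[of p q] off1[of q p] off2[of p q] off2[of q p] by auto
  qed
  fix X
  show "r1 X = r2 X"
    using cfun_expand[OF gamma_lin[OF r1], of X] cfun_expand[OF gamma_lin[OF r2], of X] units by simp
qed

(* Extremality in Gamma: in a decomposition rho = t r1 + (1-t) r2 of rho = diag_state (gram a g),
   both states vanish off the diagonal pairs, and their compressions to the diagonal pairs are
   correlation matrices decomposing gram a g; by gram_extreme they coincide, hence r1 = r2. *)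
lemma diag_state_gram_extreme:
  fixes g :: "'n::finite \<Rightarrow> nat \<Rightarrow> complex" and b :: "nat \<Rightarrow> 'n"
  assumes frame: "test_frame a g b" and unit: "\<And>j. gram a g j j = 1"
  shows "extreme_in Gamma_mts (diag_state (gram a g))"
  unfolding extreme_in_def
proof (intro conjI ballI allI impI)
  show "diag_state (gram a g) \<in> Gamma_mts" by (rule diag_state_gram_Gamma[OF unit])
  fix r1 r2 and t :: real
  assume r1: "r1 \<in> Gamma_mts" and r2: "r2 \<in> Gamma_mts"
    and h: "0 < t \<and> t < 1 \<and> diag_state (gram a g) = (\<lambda>X. t *\<^sub>R r1 X + (1 - t) *\<^sub>R r2 X)"
  have t: "0 < t" "t < 1" using h by auto
  have comb: "diag_state (gram a g) X = complex_of_real t * r1 X + complex_of_real (1-t) * r2 X" for X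
    using h by (simp add: scaleR_conv_of_real)
  have comb': "diag_state (gram a g) X = complex_of_real (1-t) * r2 X + complex_of_real (1-(1-t)) * r1 X" for X
    using comb[of X] by simp
  have off1: "\<And>p q. fst p \<noteq> snd p \<Longrightarrow> r1 (matrix_unit p q) = 0 \<and> r1 (matrix_unit q p) = 0"
    by (rule gamma_component_offdiag[OF r1 r2 t comb])
  have off2: "\<And>p q. fst p \<noteq> snd p \<Longrightarrow> r2 (matrix_unit p q) = 0 \<and> r2 (matrix_unit q p) = 0"
    by (rule gamma_component_offdiag[OF r2 r1 _ _ comb']) (use t in auto)
  define nn where "nn = (of_nat CARD('n) :: complex)"
  have nn0: "nn \<noteq> 0" unfolding nn_def by simp
  define M1 where "M1 x u = nn * r1 (matrix_unit (x,x) (u,u))" for x u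
  define M2 where "M2 x u = nn * r2 (matrix_unit (x,x) (u,u))" for x u
  have "gram a g x u = complex_of_real t * M1 x u + complex_of_real (1-t) * M2 x u" for x u
  proof -
    have "gram a g x u / nn = complex_of_real t * r1 (matrix_unit (x,x) (u,u)) + complex_of_real (1-t) * r2 (matrix_unit (x,x) (u,u))"
      using comb[of "matrix_unit (x,x) (u,u)"] unfolding nn_def by (simp add: diag_state_matrix_unit)
    then show ?thesis using nn0 unfolding M1_def M2_def by (simp add: field_simps)
  qed
  moreover have "psd_kernel M1" "psd_kernel M2"
    unfolding M1_def M2_def nn_def using gamma_compression_psd r1 r2 by blast+
  moreover have "M1 x x = 1" "M2 x x = 1" for x
    unfolding M1_def M2_def using gamma_diag_value[OF r1 off1] gamma_diag_value[OF r2 off2] nn0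
    by (simp_all add: nn_def)
  ultimately have "M1 = gram a g" "M2 = gram a g" using gram_extreme[OF frame _ _ _ _ t] by blast+
  then have "M1 x u = M2 x u" for x u by simp
  then have diag: "r1 (matrix_unit (x,x) (u,u)) = r2 (matrix_unit (x,x) (u,u))" for x u
    using nn0 unfolding M1_def M2_def by simp
  show "r1 = r2" by (rule gamma_eq_from_diag_pairs[OF r1 r2 off1 off2 diag])
qed

(* Complex scalar multiplication on C^m, making it a vector space over C, so that the
   library's dimension bounds for independent sets are available. *)
definition cscaleV :: "complex \<Rightarrow> complex^'m::finite \<Rightarrow> complex^'m" where
  "cscaleV c v = (\<chi> i. c * v $ i)"

lemma vector_space_cscaleV: "vector_space (cscaleV :: complex \<Rightarrow> complex^'m::finite \<Rightarrow> complex^'m)"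
  by unfold_locales (simp_all add: cscaleV_def vec_eq_iff algebra_simps)

lemma module_cscaleV: "module (cscaleV :: complex \<Rightarrow> complex^'m::finite \<Rightarrow> complex^'m)"
  using vector_space_cscaleV module_iff_vector_space by blast

lemma cindep_set_independent:
  fixes S :: "(complex^'m::finite) set"
  assumes "cindep_set S" and fS: "finite S"
  shows "\<not> module.dependent cscaleV S"
proof
  assume "module.dependent cscaleV S"
  then obtain t u where t: "finite t" "t \<subseteq> S" "(\<Sum>v\<in>t. cscaleV (u v) v) = 0" and nz: "\<exists>v\<in>t. u v \<noteq> 0"
    unfolding module.dependent_explicit[OF module_cscaleV] by blast
  define c where "c v = (if v \<in> t then u v else 0)" for v
  have "(\<Sum>x\<in>S. (\<chi> i. c x * x $ i)) = (\<Sum>x\<in>t. (\<chi> i. c x * x $ i))"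
    by (rule sum.mono_neutral_right[OF fS t(2)]) (auto simp: c_def vec_eq_iff)
  also have "\<dots> = (\<Sum>v\<in>t. cscaleV (u v) v)" by (intro sum.cong refl) (simp add: c_def cscaleV_def)
  finally have "(\<Sum>x\<in>S. (\<chi> i. c x * x $ i)) = 0" using t(3) by simp
  then have "\<forall>x\<in>S. c x = 0" using assms unfolding cindep_set_def by blast
  moreover obtain v where "v \<in> t" "u v \<noteq> 0" using nz by blast
  ultimately show False using t(2) unfolding c_def by force
qed

lemma finite_columns: "finite (columns (D :: complex^'m::finite^'m))"
proof -
  have "columns D = (\<lambda>i. column i D) ` UNIV" unfolding columns_def by auto
  then show ?thesis by simp
qed

lemma crank_eq:
  fixes D :: "complex^'m::finite^'m" and T :: "(complex^'m) set"
  assumes TD: "T \<subseteq> columns D" and Ti: "cindep_set T" and Tc: "card T = a" and Tf: "finite T"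
    and sp: "columns D \<subseteq> module.span cscaleV T"
  shows "crank D = a"
proof -
  have bound: "card S \<le> a" if "S \<subseteq> columns D" "cindep_set S" for S
  proof -
    have "\<not> module.dependent cscaleV S"
      using cindep_set_independent[OF that(2)] that(1) finite_columns finite_subset by blast
    moreover have "S \<subseteq> module.span cscaleV T" using that(1) sp by blast
    ultimately show ?thesis using vector_space.independent_span_bound[OF vector_space_cscaleV Tf] Tc by blast
  qed
  show ?thesis unfolding crank_def
  proof (rule Max_eqI)
    show "finite {card S |S. S \<subseteq> columns D \<and> cindep_set S}"
      by (rule finite_subset[of _ "{..a}"]) (auto dest: bound)
    show "y \<le> a" if "y \<in> {card S |S. S \<subseteq> columns D \<and> cindep_set S}" for y
      using that bound by blast
    show "a \<in> {card S |S. S \<subseteq> columns D \<and> cindep_set S}" using TD Ti Tc by blast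
  qed
qed

lemma density_matrix:
  fixes f :: "complex^'m::finite^'m \<Rightarrow> complex"
  assumes f: "clinear_functional f"
  shows "(THE D. \<forall>X. f X = Tr (D ** X)) = (\<chi> i k. f (matrix_unit k i))"
proof -
  have Tr_mult: "Tr (D ** X) = (\<Sum>i\<in>UNIV. \<Sum>k\<in>UNIV. D $ i $ k * X $ k $ i)" for D X :: "complex^'m^'m"
    by (simp add: Tr_def matrix_matrix_mult_def)
  show ?thesis
  proof (rule the_equality)
    show "\<forall>X. f X = Tr ((\<chi> i k. f (matrix_unit k i)) ** X)"
    proof
      fix X
      have "f X = (\<Sum>k\<in>UNIV. \<Sum>i\<in>UNIV. X $ k $ i * f (matrix_unit k i))" by (rule cfun_expand[OF f])
      also have "\<dots> = (\<Sum>i\<in>UNIV. \<Sum>k\<in>UNIV. X $ k $ i * f (matrix_unit k i))" by (rule sum.swap)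
      finally show "f X = Tr ((\<chi> i k. f (matrix_unit k i)) ** X)" unfolding Tr_mult by (simp add: mult.commute)
    qed
  next
    fix D assume h: "\<forall>X. f X = Tr (D ** X)"
    have "D $ i $ k = f (matrix_unit k i)" for i k
    proof -
      have "Tr (D ** matrix_unit k i) = (\<Sum>i'\<in>UNIV. \<Sum>k'\<in>UNIV. if i' = i \<and> k' = k then D $ i' $ k' else 0)"
        unfolding Tr_mult by (intro sum.cong refl) auto
      then show ?thesis using h by (simp add: dsum_and)
    qed
    then show "D = (\<chi> i k. f (matrix_unit k i))" by (simp add: vec_eq_iff)
  qed
qed

(* The vectors (g x p / n) placed on the diagonal pairs (x,x); they span the columns of the
   density matrix of diag_state (gram a g). *)
definition diag_column :: "('n::finite \<Rightarrow> nat \<Rightarrow> complex) \<Rightarrow> nat \<Rightarrow> complex^('n \<times> 'n)" where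
  "diag_column g p = (\<chi> i. if fst i = snd i then g (fst i) p / of_nat CARD('n) else 0)"

lemma diag_column_at_basis:
  fixes g :: "'n::finite \<Rightarrow> nat \<Rightarrow> complex"
  assumes gb: "\<And>p. p < a \<Longrightarrow> g (b p) = (\<lambda>i. if i = p then 1 else 0)" and q: "q < a"
  shows "diag_column g p $ (b q, b q) = (if p = q then 1 / of_nat CARD('n) else 0)"
  unfolding diag_column_def using gb[OF q] by simp

lemma diag_column_inj:
  fixes g :: "'n::finite \<Rightarrow> nat \<Rightarrow> complex"
  assumes gb: "\<And>p. p < a \<Longrightarrow> g (b p) = (\<lambda>i. if i = p then 1 else 0)"
  shows "inj_on (diag_column g) {..<a}"
proof (rule inj_onI)
  fix p q assume pq: "p \<in> {..<a}" "q \<in> {..<a}" "diag_column g p = diag_column g q"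
  then have "diag_column g p $ (b q, b q) = diag_column g q $ (b q, b q)" by simp
  moreover have "q < a" using pq by simp
  ultimately show "p = q"
    using diag_column_at_basis[OF gb \<open>q < a\<close>, where p=p] diag_column_at_basis[OF gb \<open>q < a\<close>, where p=q]
    by (auto split: if_splits)
qed

lemma diag_column_indep:
  fixes g :: "'n::finite \<Rightarrow> nat \<Rightarrow> complex"
  assumes gb: "\<And>p. p < a \<Longrightarrow> g (b p) = (\<lambda>i. if i = p then 1 else 0)"
  shows "cindep_set (diag_column g ` {..<a})"
  unfolding cindep_set_def
proof (intro allI impI ballI)
  fix c :: "complex^('n\<times>'n) \<Rightarrow> complex" and v
  assume z: "(\<Sum>x\<in>diag_column g ` {..<a}. (\<chi> i. c x * x $ i)) = 0" and v: "v \<in> diag_column g ` {..<a}"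
  obtain q where q: "q < a" "v = diag_column g q" using v by auto
  have "(\<Sum>p<a. (\<chi> i. c (diag_column g p) * diag_column g p $ i)) = 0"
    using z by (simp add: sum.reindex[OF diag_column_inj[OF gb]])
  then have "(\<Sum>p<a. (\<chi> i. c (diag_column g p) * diag_column g p $ i)) $ (b q, b q) = 0" by simp
  then have "(\<Sum>p<a. c (diag_column g p) * diag_column g p $ (b q, b q)) = 0" by (simp add: sum_component)
  moreover have "(\<Sum>p<a. c (diag_column g p) * diag_column g p $ (b q, b q)) = c (diag_column g q) / of_nat CARD('n)"
    using q(1) by (simp add: diag_column_at_basis[OF gb q(1)] if_distrib[of "\<lambda>x. _ * x"] cong: if_cong)
  ultimately show "c v = 0" using q by simp
qed

lemma diag_state_density_column:
  fixes g :: "'n::finite \<Rightarrow> nat \<Rightarrow> complex"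
  shows "column k (\<chi> i k. diag_state (gram a g) (matrix_unit k i))
     = (if fst k = snd k then (\<Sum>p<a. cscaleV (cnj (g (fst k) p)) (diag_column g p)) else 0)"
proof -
  have "diag_state (gram a g) (matrix_unit k i) = (if fst k = snd k \<and> fst i = snd i then gram a g (fst k) (fst i) / of_nat CARD('n) else 0)" for i
    by (cases k, cases i) (simp add: diag_state_matrix_unit)
  then show ?thesis
    by (simp add: column_def vec_eq_iff sum_component cscaleV_def diag_column_def gram_def sum_divide_distrib)
qed

lemma diag_state_gram_rank:
  fixes g :: "'n::finite \<Rightarrow> nat \<Rightarrow> complex" and b :: "nat \<Rightarrow> 'n"
  assumes gb: "\<And>p. p < a \<Longrightarrow> g (b p) = (\<lambda>i. if i = p then 1 else 0)"
  shows "state_rank (diag_state (gram a g)) = a"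
proof -
  define D :: "complex^('n\<times>'n)^('n\<times>'n)" where "D = (\<chi> i k. diag_state (gram a g) (matrix_unit k i))"
  define T where "T = diag_column g ` {..<a}"
  have "T \<subseteq> columns D"
  proof
    fix v assume "v \<in> T"
    then obtain p where p: "p < a" "v = diag_column g p" unfolding T_def by auto
    have "column (b p, b p) D = diag_column g p"
      unfolding D_def diag_state_density_column using gb[OF p(1)] p(1)
      by (simp add: vec_eq_iff sum_component cscaleV_def if_distrib[of cnj] if_distrib[of "\<lambda>x. x * _"] cong: if_cong)
    then show "v \<in> columns D" unfolding columns_def using p by (intro CollectI exI[of _ "(b p, b p)"]) simp
  qed
  moreover have "columns D \<subseteq> module.span cscaleV T"
  proof
    fix v assume "v \<in> columns D"
    then obtain k where k: "v = column k D" unfolding columns_def by auto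
    have "(\<Sum>p<a. cscaleV (cnj (g (fst k) p)) (diag_column g p)) \<in> module.span cscaleV T"
      by (intro module.span_sum[OF module_cscaleV] module.span_scale[OF module_cscaleV] module.span_base[OF module_cscaleV])
        (auto simp: T_def)
    then show "v \<in> module.span cscaleV T"
      using module.span_zero[OF module_cscaleV] unfolding k D_def diag_state_density_column by auto
  qed
  moreover have "card T = a" unfolding T_def using card_image[OF diag_column_inj[OF gb]] by simp
  ultimately have "crank D = a"
    using crank_eq diag_column_indep[OF gb] unfolding T_def by blast
  then show ?thesis unfolding state_rank_def density_matrix[OF diag_state_clinear] D_def .
qed

lemma diag_state_gram_diagonal:
  assumes unit: "\<And>j. gram a g j j = 1"
  shows "diagonal_mts (diag_state (gram a g))"
  unfolding diagonal_mts_def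
proof (intro bexI conjI)
  show "schur (gram a g) \<in> UCPT" by (rule schur_gram_UCPT[OF unit])
  show "diagonal_map (schur (gram a g))" unfolding diagonal_map_def
    by (intro exI[of _ "\<chi> i j. gram a g i j"]) (simp add: schur_def)
  show "diag_state (gram a g) = pi_map (schur (gram a g))" by (simp add: pi_map_schur)
qed

lemma test_vec_unit:
  assumes "p < a" "q < a"
  shows "(\<Sum>i<a. cnj (test_vec (p,q) i) * test_vec (p,q) i) = 1"
proof -
  have two: "(\<Sum>i<a. cnj (two_point p' c1 q' c2 i) * two_point p' c1 q' c2 i) = cnj c1 * c1 + cnj c2 * c2"
    if "p' \<noteq> q'" "p' < a" "q' < a" for p' q' c1 c2
  proof -
    have "(\<Sum>i<a. cnj (two_point p' c1 q' c2 i) * two_point p' c1 q' c2 i)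
        = (\<Sum>i<a. (if i = p' then cnj c1 * c1 else 0) + (if i = q' then cnj c2 * c2 else 0))"
      using that(1) by (intro sum.cong refl) (auto simp: two_point_def)
    then show ?thesis using that by (simp add: sum.distrib)
  qed
  show ?thesis
  proof (cases "p = q")
    case True
    have "(\<Sum>i<a. cnj (test_vec (p,q) i) * test_vec (p,q) i) = (\<Sum>i<a. if i = p then 1 else 0)"
      using True by (intro sum.cong refl) (auto simp: test_vec_def)
    then show ?thesis using assms by simp
  next
    case False
    have "cnj (4 * \<i> / 5) * (4 * \<i> / 5) = (16/25 :: complex)" by (simp add: complex_eq_iff)
    then show ?thesis using False assms by (cases "p < q") (simp_all add: test_vec_def two)
  qed
qed

(* Since a^2 <= n, the pairs in {..<a} x {..<a} inject into the index type; attaching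
   test_vec to the image of each pair gives a test frame of unit vectors. *)
lemma test_frame_exists:
  assumes a: "1 \<le> a" and n: "a ^ 2 \<le> CARD('n)"
  obtains g :: "'n::finite \<Rightarrow> nat \<Rightarrow> complex" and b where "test_frame a g b" "\<And>j. gram a g j j = 1"
proof -
  define S where "S = {..<a} \<times> {..<a}"
  have "card S \<le> card (UNIV :: 'n set)" using n unfolding S_def by (simp add: power2_eq_square)
  then obtain \<beta> :: "nat \<times> nat \<Rightarrow> 'n" where inj: "inj_on \<beta> S"
    using card_le_inj[of S "UNIV :: 'n set"] unfolding S_def by auto
  define \<tau> where "\<tau> j = (if j \<in> \<beta> ` S then the_inv_into S \<beta> j else (0,0))" for j
  have \<tau>\<beta>: "\<tau> (\<beta> x) = x" if "x \<in> S" for x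
    unfolding \<tau>_def using that inj by (simp add: the_inv_into_f_f)
  have \<tau>S: "\<tau> j \<in> S" for j
    unfolding \<tau>_def using a inj by (auto simp: S_def the_inv_into_into)
  define g where "g j = test_vec (\<tau> j)" for j
  define b where "b p = \<beta> (p,p)" for p
  have "test_frame a g b"
    unfolding test_frame_def
  proof (intro conjI allI impI)
    show "g (b p) = (\<lambda>i. if i = p then 1 else 0)" if "p < a" for p
      unfolding g_def b_def using \<tau>\<beta>[of "(p,p)"] that by (simp add: S_def test_vec_def)
    show "\<exists>m. g m = test_vec (p,q)" if "p < a" "q < a" "p \<noteq> q" for p q
      using \<tau>\<beta>[of "(p,q)"] that unfolding g_def S_def by (intro exI[of _ "\<beta> (p,q)"]) simp
  qed
  moreover have "gram a g j j = 1" for j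
    using \<tau>S[of j] test_vec_unit unfolding gram_def g_def S_def by (cases "\<tau> j") auto
  ultimately show ?thesis using that by blast
qed

theorem theorem3p3:
  assumes "CARD('n::finite) \<ge> 4"
    and "a \<ge> 1"
    and "a ^ 2 \<le> CARD('n)"
  shows "\<exists>v :: nat \<Rightarrow> complex^'n^'n.
           (\<forall>i<a. diagonal_matrix (v i)) \<and>
           (\<Sum>i<a. adj (v i) ** v i) = mat 1 \<and>
           (\<Sum>i<a. v i ** adj (v i)) = mat 1 \<and>
           (let \<phi> = (\<lambda>A. \<Sum>i<a. adj (v i) ** A ** v i) in
              extreme_in UCPT \<phi> \<and> kraus_rank \<phi> = a \<and>
              extreme_in Gamma_mts (pi_map \<phi>) \<and> diagonal_mts (pi_map \<phi>) \<and>
              state_rank (pi_map \<phi>) = a)"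
proof -
  obtain g :: "'n \<Rightarrow> nat \<Rightarrow> complex" and b where frame: "test_frame a g b" and unit: "\<And>j. gram a g j j = 1"
    using test_frame_exists assms(2,3) by blast
  have gb: "\<And>p. p < a \<Longrightarrow> g (b p) = (\<lambda>i. if i = p then 1 else 0)"
    using frame unfolding test_frame_def by blast
  note phi = kraus_diag_schur[where a=a and g=g]
  show ?thesis
  proof (intro exI[of _ "kraus_diag g"] conjI allI impI)
    show "diagonal_matrix (kraus_diag g i)" for i unfolding diagonal_matrix_def kraus_diag_def by simp
    show "(\<Sum>i<a. adj (kraus_diag g i) ** kraus_diag g i) = mat 1" by (rule kraus_diag_adj_mult_sum[OF unit])
    show "(\<Sum>i<a. kraus_diag g i ** adj (kraus_diag g i)) = mat 1" by (rule kraus_diag_mult_adj_sum[OF unit])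
    show "let \<phi> = (\<lambda>A. \<Sum>i<a. adj (kraus_diag g i) ** A ** kraus_diag g i) in
            extreme_in UCPT \<phi> \<and> kraus_rank \<phi> = a \<and>
            extreme_in Gamma_mts (pi_map \<phi>) \<and> diagonal_mts (pi_map \<phi>) \<and> state_rank (pi_map \<phi>) = a"
      unfolding Let_def phi pi_map_schur
      by (intro conjI schur_gram_extreme[OF frame unit] kraus_rank_kraus_diag[where a=a, OF gb, unfolded phi]
          diag_state_gram_extreme[OF frame unit] diag_state_gram_diagonal[OF unit] diag_state_gram_rank[where a=a, OF gb])
  qed
qed

end
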